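(* Let $c>0$, $\rho>0$ with $\rho\ne1$, and let $M\ge m\ge0$ with $M>0$. Then $\mathcal{V}_{m,M}\subsetneq\mathcal{V}_{\mathcal{A}}$.
   Context: System: $\dot u=u(1-u-v)-a(t)cu$, $\dot v=\rho v(1-u-v)-a(t)u$, initial data in $[0,1]^2$. $\mathcal{A}$ is the set of functions $a:[0,+\infty)\to[0,+\infty)$ continuous except at most at finitely many points; a solution for $a$ is continuous, $C^1$ off the discontinuities of $a$, solves the system there and is continuous at $t=0$. Stopping time $T_s$: $+\infty$ if the solution stays in $[0,1]\times(0,1]$ for all $t\ge0$, else the first $T$ with $v(T)=0$, $u(T)>0$. $\mathcal{E}(a(\cdot))$ = set of initial data in $[0,1]^2\setminus\{(0,0)\}$ with $T_s<\infty$; for $\mathcal{T}\subseteq\mathcal{A}$, $\mathcal{V}_{\mathcal{T}}=\bigcup_{a\in\mathcal{T}}\mathcal{E}(a(\cdot))$. $\mathcal{A}_{m,M}=\{a\in\mathcal{A}: m\le a(t)\le M\ \forall t>0\}$ and $\mathcal{V}_{m,M}=\mathcal{V}_{\mathcal{A}_{m,M}}$. *)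

theory Defs
  imports Complex_Main
begin

definition disc :: "(real \<Rightarrow> real) \<Rightarrow> real set" where
  "disc a = {t. t \<ge> 0 \<and> \<not> continuous (at t within {0..}) a}"

definition admissible :: "(real \<Rightarrow> real) set" where
  "admissible = {a. (\<forall>t\<ge>0. a t \<ge> 0) \<and> finite (disc a)}"

definition admissible_mM :: "real \<Rightarrow> real \<Rightarrow> (real \<Rightarrow> real) set" where
  "admissible_mM m M = {a \<in> admissible. \<forall>t>0. m \<le> a t \<and> a t \<le> M}"

definition solves_on :: "real \<Rightarrow> real \<Rightarrow> (real \<Rightarrow> real) \<Rightarrow> real
    \<Rightarrow> (real \<Rightarrow> real) \<Rightarrow> (real \<Rightarrow> real) \<Rightarrow> bool" where
  "solves_on c \<rho> a T u v \<longleftrightarrow>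
     continuous_on {0..T} u \<and> continuous_on {0..T} v \<and>
     (\<forall>t. 0 < t \<and> t < T \<and> t \<notin> disc a \<longrightarrow>
        (u has_real_derivative (u t * (1 - u t - v t) - a t * c * u t)) (at t) \<and>
        (v has_real_derivative (\<rho> * v t * (1 - u t - v t) - a t * u t)) (at t))"

text \<open>E(a): initial data in [0,1]^2 minus the origin with finite stopping time,
  i.e. the (unique) solution reaches a point with v = 0 and u > 0.\<close>
definition E_set :: "real \<Rightarrow> real \<Rightarrow> (real \<Rightarrow> real) \<Rightarrow> (real \<times> real) set" where
  "E_set c \<rho> a = {(u0, v0). 0 \<le> u0 \<and> u0 \<le> 1 \<and> 0 \<le> v0 \<and> v0 \<le> 1 \<and> (u0, v0) \<noteq> (0, 0) \<and>
      (\<exists>T\<ge>0. \<exists>u v. solves_on c \<rho> a T u v \<and> u 0 = u0 \<and> v 0 = v0 \<and> v T = 0 \<and> u T > 0)}"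

definition V_set :: "real \<Rightarrow> real \<Rightarrow> (real \<Rightarrow> real) set \<Rightarrow> (real \<times> real) set" where
  "V_set c \<rho> \<T> = (\<Union>a\<in>\<T>. E_set c \<rho> a)"

end

theory Submission
  imports Defs "HOL-Analysis.Analysis"
begin

text \<open>
  In the coordinates \<open>D = 1 - u - v\<close> and \<open>W = v - u / c\<close> the control drops out of the
  equation for \<open>W\<close>: \<open>W' = \<gamma> D (W - W\<^sup>*) + \<gamma> W\<^sup>* D\<^sup>2\<close> with \<open>\<gamma> = (\<rho> c + 1) / (c + 1)\<close> and
  \<open>W\<^sup>* = (1 - \<rho>) / (1 + \<rho> c)\<close>. A control bounded by \<open>M\<close> bounds \<open>D'\<close>, so \<open>D\<close> keeps its sign
  for a fixed time. For \<open>\<rho> < 1\<close>, starting with \<open>D \<le> -\<delta>\<close> and \<open>W\<close> slightly below \<open>W\<^sup>* > 0\<close>,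
  the quadratic term lifts \<open>W\<close> above \<open>W\<^sup>*\<close> before \<open>v\<close> can vanish, and \<open>W \<ge> W\<^sup>*\<close> is invariant,
  so \<open>v > u / c \<ge> 0\<close> forever. For \<open>\<rho> > 1\<close>, starting with \<open>D \<ge> 1/2\<close> and \<open>W\<close> slightly below
  \<open>0\<close>, the same mechanism makes \<open>W \<ge> 0\<close>, so \<open>u\<close> vanishes when \<open>v\<close> does.

  Conversely, a smooth curve in the plane satisfying the control-free equation for \<open>W\<close> is a
  solution for the control \<open>a = (D - u'/u) / c\<close> read off from the equation for \<open>u\<close>; it is
  admissible as soon as it is nonnegative. Explicit such curves from the points above reach
  \<open>v = 0\<close> with \<open>u > 0\<close>, necessarily with unbounded controls.
\<close>

section \<open>Differential inequalities with finitely many exceptional points\<close>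

lemma DERIV_nonneg_imp_le_except_finite:
  fixes f f' :: "real \<Rightarrow> real"
  assumes "r \<le> s" "finite S" "continuous_on {r..s} f"
    and "\<And>t. t \<in> {r<..<s} - S \<Longrightarrow> (f has_real_derivative f' t) (at t) \<and> 0 \<le> f' t"
  shows "f r \<le> f s"
proof -
  define g where "g t = (if t \<in> {r<..<s} - S then f' t else 0)" for t
  have "(f' has_integral (f s - f r)) {r..s}"
    by (rule fundamental_theorem_of_calculus_interior_strong[OF assms(2,1) _ assms(3)])
      (use assms(4) in \<open>simp add: has_real_derivative_iff_has_vector_derivative\<close>)
  then have "(g has_integral (f s - f r)) {r..s}"
  proof (rule has_integral_spike[rotated 2])
    show "negligible ({r, s} \<union> S)"
      using assms(2) by (simp add: negligible_finite)
  qed (auto simp: g_def)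
  then show ?thesis
    using has_integral_nonneg[of g "f s - f r" "{r..s}"] assms(4) by (force simp: g_def)
qed

lemma DERIV_ge_imp_linear_lower_bound:
  fixes f f' :: "real \<Rightarrow> real"
  assumes "r \<le> s" "finite S" "continuous_on {r..s} f"
    and "\<And>t. t \<in> {r<..<s} - S \<Longrightarrow> (f has_real_derivative f' t) (at t) \<and> L \<le> f' t"
  shows "f r + L * (s - r) \<le> f s"
proof -
  have "f r - L * r \<le> f s - L * s"
  proof (rule DERIV_nonneg_imp_le_except_finite[OF assms(1,2)])
    show "continuous_on {r..s} (\<lambda>t. f t - L * t)"
      using assms(3) by (intro continuous_intros)
    fix t assume "t \<in> {r<..<s} - S"
    with assms(4) show "((\<lambda>t. f t - L * t) has_real_derivative f' t - L) (at t) \<and> 0 \<le> f' t - L"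
      by (auto intro!: derivative_eq_intros)
  qed
  then show ?thesis by (simp add: algebra_simps)
qed

lemma nonneg_barrier:
  fixes y y' :: "real \<Rightarrow> real"
  assumes "r \<le> s" "finite S" "continuous_on {r..s} y" "0 \<le> y r"
    and "\<And>t. t \<in> {r<..<s} - S \<Longrightarrow> y t < 0 \<Longrightarrow>
      (y has_real_derivative y' t) (at t) \<and> K * y t \<le> y' t"
  shows "\<forall>t\<in>{r..s}. 0 \<le> y t"
proof (rule ccontr)
  assume "\<not> ?thesis"
  then obtain t where t: "t \<in> {r..s}" "y t < 0" by force
  define A where "A = {x\<in>{r..t}. 0 \<le> y x}"
  have "A = {r..t} \<inter> y -` {0..}"
    by (auto simp: A_def)
  moreover have "continuous_on {r..t} y"
    using assms(3) t by (auto intro: continuous_on_subset)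
  ultimately have "closed A"
    using continuous_closed_preimage by force
  moreover have "r \<in> A" "bdd_above A"
    using t assms(4) by (auto simp: A_def)
  ultimately have "Sup A \<in> A"
    using closed_contains_Sup by blast
  then have r': "r \<le> Sup A" "Sup A < t" "0 \<le> y (Sup A)"
    using t by (auto simp: A_def order.order_iff_strict)
  have neg: "y x < 0" if "x \<in> {Sup A<..t}" for x
    using that cSup_upper[OF _ \<open>bdd_above A\<close>, of x] r' by (force simp: A_def)
  \<comment> \<open>On the last stretch where \<open>y < 0\<close>, \<open>y(x) exp(-K x)\<close> is nondecreasing,
    yet it goes from \<open>\<ge> 0\<close> to \<open>< 0\<close>.\<close>
  define z where "z x = y x * exp (- K * x)" for x
  have "z (Sup A) \<le> z t"
  proof (rule DERIV_nonneg_imp_le_except_finite[OF less_imp_le[OF r'(2)] assms(2)])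
    show "continuous_on {Sup A..t} z"
      unfolding z_def using r' t
      by (intro continuous_intros continuous_on_subset[OF assms(3)]) auto
    fix x assume x: "x \<in> {Sup A<..<t} - S"
    then have "x \<in> {r<..<s} - S" "y x < 0"
      using r' t neg by auto
    from assms(5)[OF this] show "(z has_real_derivative (y' x - K * y x) * exp (- K * x)) (at x)
        \<and> 0 \<le> (y' x - K * y x) * exp (- K * x)"
      unfolding z_def by (auto intro!: derivative_eq_intros simp: algebra_simps)
  qed
  moreover have "0 \<le> z (Sup A)" "z t < 0"
    using r' t by (simp_all add: z_def mult_neg_pos)
  ultimately show False by linarith
qed

lemma nonneg_preserved_linear:
  fixes y q :: "real \<Rightarrow> real"
  assumes "r \<le> s" "finite S" "continuous_on {r..s} y" "0 \<le> y r"
    and "\<And>t. t \<in> {r<..<s} - S \<Longrightarrow> (y has_real_derivative y t * q t) (at t) \<and> q t \<le> K"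
  shows "\<forall>t\<in>{r..s}. 0 \<le> y t"
proof (rule nonneg_barrier[OF assms(1-4)])
  fix t assume "t \<in> {r<..<s} - S" "y t < 0"
  with assms(5)[of t] show "(y has_real_derivative y t * q t) (at t) \<and> K * y t \<le> y t * q t"
    by (auto simp: mult.commute intro: mult_right_mono_neg)
qed

lemma first_root:
  fixes f :: "real \<Rightarrow> real"
  assumes "continuous_on {0..T} f" "0 < f 0" "f T \<le> 0" "0 \<le> T"
  obtains T' where "0 < T'" "T' \<le> T" "f T' = 0" "\<And>t. t \<in> {0..<T'} \<Longrightarrow> 0 < f t"
proof -
  define A where "A = {t\<in>{0..T}. f t \<le> 0}"
  have "A = {0..T} \<inter> f -` {..0}"
    by (auto simp: A_def)
  then have "closed A"
    using continuous_closed_preimage[OF assms(1)] by simp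
  moreover have "T \<in> A" "bdd_below A"
    using assms by (auto simp: A_def)
  ultimately have "Inf A \<in> A"
    using closed_contains_Inf by blast
  then have T': "0 < Inf A" "Inf A \<le> T" "f (Inf A) \<le> 0"
    using assms(2) by (auto simp: A_def order.order_iff_strict)
  have pos: "0 < f t" if "t \<in> {0..<Inf A}" for t
    using that cInf_lower[OF _ \<open>bdd_below A\<close>, of t] T' by (force simp: A_def)
  have "continuous_on {0..Inf A} f"
    using assms(1) T' by (auto intro: continuous_on_subset)
  then obtain x where "0 \<le> x" "x \<le> Inf A" "f x = 0"
    using IVT2'[of f "Inf A" 0 0] assms(2) T' by auto
  with pos[of x] have "f (Inf A) = 0"
    by (cases "x = Inf A") auto
  with T' pos that show thesis by blast
qed

section \<open>Solutions under an admissible control\<close>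

definition W_gain :: "real \<Rightarrow> real \<Rightarrow> real" where
  "W_gain c \<rho> = (\<rho> * c + 1) / (c + 1)"

definition W_crit :: "real \<Rightarrow> real \<Rightarrow> real" where
  "W_crit c \<rho> = (1 - \<rho>) / (1 + \<rho> * c)"

lemma W_gain_pos: "0 < c \<Longrightarrow> 0 < \<rho> \<Longrightarrow> 0 < W_gain c \<rho>"
  unfolding W_gain_def by (intro divide_pos_pos add_pos_pos mult_pos_pos) auto

lemma W_crit_sign:
  assumes "0 < c" "0 < \<rho>"
  shows "\<rho> \<le> 1 \<Longrightarrow> 0 \<le> W_crit c \<rho>" and "\<rho> < 1 \<Longrightarrow> 0 < W_crit c \<rho>"
    and "1 \<le> \<rho> \<Longrightarrow> W_crit c \<rho> \<le> 0" and "1 < \<rho> \<Longrightarrow> W_crit c \<rho> < 0"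
proof -
  have "0 < 1 + \<rho> * c"
    using assms by (simp add: add_pos_pos)
  then show "\<rho> \<le> 1 \<Longrightarrow> 0 \<le> W_crit c \<rho>" "\<rho> < 1 \<Longrightarrow> 0 < W_crit c \<rho>"
    "1 \<le> \<rho> \<Longrightarrow> W_crit c \<rho> \<le> 0" "1 < \<rho> \<Longrightarrow> W_crit c \<rho> < 0"
    by (simp_all add: W_crit_def divide_nonpos_pos divide_neg_pos)
qed

lemma minus_W_crit_less: "0 < c \<Longrightarrow> 0 < \<rho> \<Longrightarrow> - W_crit c \<rho> < 1 / c"
  by (simp add: W_crit_def field_simps add_pos_pos)

lemma W_deriv_identity:
  fixes c \<rho> u v a :: real
  assumes "0 < c" "0 < \<rho>"
  shows "(\<rho> * v * (1 - u - v) - a * u) - (u * (1 - u - v) - a * c * u) / c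
     = W_gain c \<rho> * (1 - u - v) * ((v - u / c) - W_crit c \<rho>)
       + W_gain c \<rho> * W_crit c \<rho> * (1 - u - v)^2"
proof -
  have "0 < \<rho> * c"
    using assms by simp
  then have "1 + \<rho> * c \<noteq> 0" "c + 1 \<noteq> 0"
    using assms by linarith+
  with assms show ?thesis
    by (simp add: W_gain_def W_crit_def divide_simps power2_eq_square) algebra
qed

locale controlled_solution =
  fixes c \<rho> T :: real and a u v :: "real \<Rightarrow> real"
  assumes c_pos: "0 < c" and rho_pos: "0 < \<rho>" and T_nonneg: "0 \<le> T"
    and control_admissible: "a \<in> admissible"
    and solution: "solves_on c \<rho> a T u v"
begin

definition D :: "real \<Rightarrow> real" where
  "D t = 1 - u t - v t"

definition W :: "real \<Rightarrow> real" where
  "W t = v t - u t / c"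

lemma finite_disc: "finite (disc a)"
  using control_admissible by (simp add: admissible_def)

lemma control_nonneg: "0 \<le> t \<Longrightarrow> 0 \<le> a t"
  using control_admissible by (simp add: admissible_def)

lemma continuous_u: "continuous_on {0..T} u"
  and continuous_v: "continuous_on {0..T} v"
  using solution by (simp_all add: solves_on_def)

lemma continuous_D: "continuous_on {0..T} D"
  and continuous_W: "continuous_on {0..T} W"
  unfolding D_def[abs_def] W_def[abs_def]
  using continuous_u continuous_v c_pos by (auto intro!: continuous_intros)

lemma u_deriv: "t \<in> {0<..<T} - disc a \<Longrightarrow> (u has_real_derivative u t * (D t - a t * c)) (at t)"
  and v_deriv: "t \<in> {0<..<T} - disc a \<Longrightarrow> (v has_real_derivative \<rho> * v t * D t - a t * u t) (at t)"
  using solution by (auto simp: solves_on_def D_def algebra_simps)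

lemma D_deriv: "t \<in> {0<..<T} - disc a \<Longrightarrow>
    (D has_real_derivative (c + 1) * a t * u t - (u t + \<rho> * v t) * D t) (at t)"
  unfolding D_def[abs_def]
  by (rule derivative_eq_intros u_deriv v_deriv refl | assumption)+
    (simp add: D_def algebra_simps)

lemma W_deriv: "t \<in> {0<..<T} - disc a \<Longrightarrow> (W has_real_derivative
    W_gain c \<rho> * D t * (W t - W_crit c \<rho>) + W_gain c \<rho> * W_crit c \<rho> * (D t)^2) (at t)"
proof -
  assume t: "t \<in> {0<..<T} - disc a"
  have "(W has_real_derivative (\<rho> * v t * D t - a t * u t) - u t * (D t - a t * c) / c) (at t)"
    unfolding W_def[abs_def] using u_deriv[OF t] v_deriv[OF t] c_pos
    by (auto intro!: derivative_eq_intros)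
  also have "(\<rho> * v t * D t - a t * u t) - u t * (D t - a t * c) / c
      = W_gain c \<rho> * D t * (W t - W_crit c \<rho>) + W_gain c \<rho> * W_crit c \<rho> * (D t)^2"
    using W_deriv_identity[OF c_pos rho_pos, of "v t" "u t" "a t"]
    by (simp add: D_def W_def algebra_simps)
  finally show ?thesis .
qed

text \<open>\<open>u\<close> solves a linear equation, so its sign is preserved forward in time.\<close>
lemma u_sign_preserved:
  assumes "0 \<le> s" "s \<le> t" "t \<le> T"
  shows "0 \<le> u s \<Longrightarrow> 0 \<le> u t" and "u s \<le> 0 \<Longrightarrow> u t \<le> 0"
proof -
  obtain B where B: "\<And>x. x \<in> {0..T} \<Longrightarrow> D x \<le> B"
    using compact_attains_sup[OF compact_continuous_image[OF continuous_D compact_Icc]]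
      T_nonneg by fastforce
  have rate_le: "D x - a x * c \<le> B" if "x \<in> {s<..<t}" for x
    using B[of x] mult_nonneg_nonneg[OF control_nonneg[of x] less_imp_le[OF c_pos]] that assms
    by auto
  have cont: "continuous_on {s..t} u"
    using continuous_u assms by (auto intro: continuous_on_subset)
  show "0 \<le> u t" if "0 \<le> u s"
  proof -
    have "\<forall>x\<in>{s..t}. 0 \<le> u x"
    proof (rule nonneg_preserved_linear[OF assms(2) finite_disc cont that, of _ B])
      fix x assume "x \<in> {s<..<t} - disc a"
      with assms rate_le[of x] u_deriv[of x]
      show "(u has_real_derivative u x * (D x - a x * c)) (at x) \<and> D x - a x * c \<le> B"
        by auto
    qed
    with assms show ?thesis by auto
  qed
  show "u t \<le> 0" if "u s \<le> 0"
  proof -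
    have "\<forall>x\<in>{s..t}. 0 \<le> - u x"
    proof (rule nonneg_preserved_linear[OF assms(2) finite_disc _ _, of _ _ B])
      fix x assume "x \<in> {s<..<t} - disc a"
      with assms rate_le[of x] u_deriv[of x]
      show "((\<lambda>x. - u x) has_real_derivative - u x * (D x - a x * c)) (at x) \<and> D x - a x * c \<le> B"
        by (auto intro!: derivative_eq_intros)
    qed (use cont that in \<open>auto intro: continuous_intros\<close>)
    with assms show ?thesis by auto
  qed
qed

lemma stays_in_box_until_v_vanishes:
  assumes "u 0 \<in> {0..1}" "v 0 \<in> {0<..1}" "v T \<le> 0"
  obtains T' where "0 < T'" "T' \<le> T" "v T' = 0" "0 \<le> u T'"
    "\<And>t. t \<in> {0..<T'} \<Longrightarrow> u t \<in> {0..1} \<and> v t \<in> {0<..1}"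
proof -
  obtain T' where T': "0 < T'" "T' \<le> T" "v T' = 0" and v_pos: "\<And>t. t \<in> {0..<T'} \<Longrightarrow> 0 < v t"
    using first_root[OF continuous_v _ assms(3) T_nonneg] assms(2) by auto
  have u_nonneg: "0 \<le> u t" if "t \<in> {0..T'}" for t
    using u_sign_preserved(1)[of 0 t] assms(1) that T' by auto
  have cont: "continuous_on {0..T'} (\<lambda>t. 1 - u t)" "continuous_on {0..T'} (\<lambda>t. 1 - v t)"
    using continuous_u continuous_v T' by (auto intro!: continuous_intros intro: continuous_on_subset)
  have u_le: "\<forall>t\<in>{0..T'}. 0 \<le> 1 - u t"
  proof (rule nonneg_barrier[OF less_imp_le[OF T'(1)] finite_disc cont(1), of _ 0])
    fix t assume t: "t \<in> {0<..<T'} - disc a" "1 - u t < 0"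
    then have "D t - a t * c < 0"
      using v_pos[of t] mult_nonneg_nonneg[OF control_nonneg[of t] less_imp_le[OF c_pos]]
      by (simp add: D_def)
    then have "u t * (D t - a t * c) \<le> 0"
      using t by (simp add: mult_nonneg_nonpos)
    with t T' u_deriv[of t] show "((\<lambda>t. 1 - u t) has_real_derivative - (u t * (D t - a t * c))) (at t)
        \<and> 0 * (1 - u t) \<le> - (u t * (D t - a t * c))"
      by (auto intro!: derivative_eq_intros)
  qed (use assms in auto)
  have v_le: "\<forall>t\<in>{0..T'}. 0 \<le> 1 - v t"
  proof (rule nonneg_barrier[OF less_imp_le[OF T'(1)] finite_disc cont(2), of _ 0])
    fix t assume t: "t \<in> {0<..<T'} - disc a" "1 - v t < 0"
    then have "\<rho> * v t * D t \<le> 0" "0 \<le> a t * u t"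
      using u_nonneg[of t] control_nonneg[of t] rho_pos by (auto simp: D_def mult_nonneg_nonpos)
    then have "\<rho> * v t * D t - a t * u t \<le> 0"
      by linarith
    with t T' v_deriv[of t] show "((\<lambda>t. 1 - v t) has_real_derivative - (\<rho> * v t * D t - a t * u t)) (at t)
        \<and> 0 * (1 - v t) \<le> - (\<rho> * v t * D t - a t * u t)"
      by (auto intro!: derivative_eq_intros)
  qed (use assms in auto)
  show thesis
    using that[OF T'] u_nonneg u_le v_le v_pos T' by auto
qed

lemma abs_D_deriv_quadratic_part:
  assumes "u t \<in> {0..1}" "v t \<in> {0..1}"
  shows "\<bar>(u t + \<rho> * v t) * D t\<bar> \<le> 1 + \<rho>"
proof -
  have "0 \<le> \<rho> * v t" "\<rho> * v t \<le> \<rho>"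
    using assms rho_pos mult_left_mono[of "v t" 1 \<rho>] by simp_all
  then have "0 \<le> u t + \<rho> * v t" "u t + \<rho> * v t \<le> 1 + \<rho>"
    using assms by auto
  moreover have "\<bar>D t\<bar> \<le> 1"
    using assms by (auto simp: D_def)
  ultimately have "\<bar>u t + \<rho> * v t\<bar> * \<bar>D t\<bar> \<le> (1 + \<rho>) * 1"
    by (intro mult_mono) auto
  then show ?thesis
    by (simp add: abs_mult)
qed

lemma D_deriv_ge:
  assumes "0 < t" "u t \<in> {0..1}" "v t \<in> {0..1}"
  shows "- (1 + \<rho>) \<le> (c + 1) * a t * u t - (u t + \<rho> * v t) * D t"
proof -
  have "0 \<le> (c + 1) * a t * u t"
    using assms c_pos control_nonneg[of t] by simp
  with abs_D_deriv_quadratic_part[OF assms(2,3)] show ?thesis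
    by linarith
qed

lemma D_deriv_le:
  assumes "0 < t" "u t \<in> {0..1}" "v t \<in> {0..1}" "a t \<le> M"
  shows "(c + 1) * a t * u t - (u t + \<rho> * v t) * D t \<le> (1 + \<rho>) + (c + 1) * M"
proof -
  have "a t * u t \<le> M"
    using assms control_nonneg[of t] mult_left_le[of "u t" "a t"] by auto
  then have "(c + 1) * a t * u t \<le> (c + 1) * M"
    using c_pos by (simp add: mult.assoc)
  with abs_D_deriv_quadratic_part[OF assms(2,3)] show ?thesis
    by linarith
qed

section \<open>Trapping regions under bounded controls\<close>

lemma D_le_linear:
  assumes "r \<le> T" "t \<in> {0..r}" "\<And>t. 0 < t \<Longrightarrow> a t \<le> M"
    and box: "\<And>t. t \<in> {0<..<r} \<Longrightarrow> u t \<in> {0..1} \<and> v t \<in> {0..1}"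
  shows "D t \<le> D 0 + ((1 + \<rho>) + (c + 1) * M) * t"
proof -
  have "(\<lambda>t. - D t) 0 + (- ((1 + \<rho>) + (c + 1) * M)) * (t - 0) \<le> (\<lambda>t. - D t) t"
  proof (rule DERIV_ge_imp_linear_lower_bound[OF _ finite_disc])
    show "continuous_on {0..t} (\<lambda>t. - D t)"
      using continuous_D assms by (auto intro!: continuous_intros intro: continuous_on_subset)
    fix x assume x: "x \<in> {0<..<t} - disc a"
    with assms D_deriv[of x] D_deriv_le[of x M] box[of x]
    show "((\<lambda>t. - D t) has_real_derivative - ((c + 1) * a x * u x - (u x + \<rho> * v x) * D x)) (at x)
        \<and> - ((1 + \<rho>) + (c + 1) * M) \<le> - ((c + 1) * a x * u x - (u x + \<rho> * v x) * D x)"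
      by (auto intro!: derivative_eq_intros)
  qed (use assms in auto)
  then show ?thesis by (simp add: algebra_simps)
qed

lemma D_ge_linear:
  assumes "r \<le> T" "t \<in> {0..r}"
    and box: "\<And>t. t \<in> {0<..<r} \<Longrightarrow> u t \<in> {0..1} \<and> v t \<in> {0..1}"
  shows "D 0 - (1 + \<rho>) * t \<le> D t"
proof -
  have "D 0 + (- (1 + \<rho>)) * (t - 0) \<le> D t"
  proof (rule DERIV_ge_imp_linear_lower_bound[OF _ finite_disc])
    show "continuous_on {0..t} D"
      using continuous_D assms by (auto intro: continuous_on_subset)
    fix x assume "x \<in> {0<..<t} - disc a"
    with assms D_deriv[of x] D_deriv_ge[of x] box[of x]
    show "(D has_real_derivative (c + 1) * a x * u x - (u x + \<rho> * v x) * D x) (at x)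
        \<and> - (1 + \<rho>) \<le> (c + 1) * a x * u x - (u x + \<rho> * v x) * D x"
      by auto
  qed (use assms in auto)
  then show ?thesis by (simp add: algebra_simps)
qed

lemma D_nonneg_preserved:
  assumes "r \<le> T" "0 \<le> r" "0 \<le> D 0"
    and box: "\<And>t. t \<in> {0<..<r} \<Longrightarrow> u t \<in> {0..1} \<and> v t \<in> {0..1}"
  shows "\<forall>t\<in>{0..r}. 0 \<le> D t"
proof (rule nonneg_barrier[where y = D and K = 0, OF assms(2) finite_disc _ assms(3)])
  show "continuous_on {0..r} D"
    using continuous_D assms by (auto intro: continuous_on_subset)
  fix t assume t: "t \<in> {0<..<r} - disc a" "D t < 0"
  then have "0 \<le> - ((u t + \<rho> * v t) * D t)" "0 \<le> (c + 1) * a t * u t"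
    using box[of t] rho_pos c_pos control_nonneg[of t] by (auto simp: mult_nonneg_nonpos)
  with t assms D_deriv[of t]
  show "(D has_real_derivative (c + 1) * a t * u t - (u t + \<rho> * v t) * D t) (at t)
      \<and> 0 * D t \<le> (c + 1) * a t * u t - (u t + \<rho> * v t) * D t"
    by auto
qed

lemma u_ge_linear:
  assumes "r \<le> T" "t \<in> {0..r}" "\<And>t. 0 < t \<Longrightarrow> a t \<le> M"
    and box: "\<And>t. t \<in> {0<..<r} \<Longrightarrow> u t \<in> {0..1} \<and> 0 \<le> D t"
  shows "u 0 - c * M * t \<le> u t"
proof -
  have "u 0 + (- (c * M)) * (t - 0) \<le> u t"
  proof (rule DERIV_ge_imp_linear_lower_bound[OF _ finite_disc])
    show "continuous_on {0..t} u"
      using continuous_u assms by (auto intro: continuous_on_subset)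
    fix x assume x: "x \<in> {0<..<t} - disc a"
    then have "a x \<le> M" "u x \<in> {0..1}" "0 \<le> D x"
      using assms(2) assms(3)[of x] box[of x] x by auto
    then have "a x * u x \<le> M" "0 \<le> u x * D x"
      using control_nonneg[of x] mult_left_le[of "u x" "a x"] x by auto
    moreover have "c * (a x * u x) \<le> c * M"
      using calculation(1) c_pos by simp
    ultimately have "- (c * M) \<le> u x * (D x - a x * c)"
      by (simp add: algebra_simps)
    with x assms u_deriv[of x]
    show "(u has_real_derivative u x * (D x - a x * c)) (at x) \<and> - (c * M) \<le> u x * (D x - a x * c)"
      by auto
  qed (use assms in auto)
  then show ?thesis by (simp add: algebra_simps)
qed

lemma W_ge_W_crit_preserved:
  assumes "\<rho> \<le> 1" "0 \<le> s" "s \<le> r" "r \<le> T" "W_crit c \<rho> \<le> W s"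
    and box: "\<And>t. t \<in> {s<..<r} \<Longrightarrow> u t \<in> {0..1} \<and> v t \<in> {0..1}"
  shows "\<forall>t\<in>{s..r}. 0 \<le> W t - W_crit c \<rho>"
proof (rule nonneg_barrier[OF assms(3) finite_disc, of _ _ "W_gain c \<rho>"])
  show "continuous_on {s..r} (\<lambda>t. W t - W_crit c \<rho>)"
    using continuous_W assms by (auto intro!: continuous_intros intro: continuous_on_subset)
  fix t assume t: "t \<in> {s<..<r} - disc a" "W t - W_crit c \<rho> < 0"
  have "0 \<le> W_crit c \<rho>"
    using W_crit_sign(1)[OF c_pos rho_pos assms(1)] .
  moreover have "D t \<le> 1"
    using box[of t] t by (simp add: D_def)
  then have "W t - W_crit c \<rho> \<le> D t * (W t - W_crit c \<rho>)"
    using t(2) by (simp add: mult_le_cancel_right2)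
  ultimately have "W_gain c \<rho> * (W t - W_crit c \<rho>) \<le>
      W_gain c \<rho> * D t * (W t - W_crit c \<rho>) + W_gain c \<rho> * W_crit c \<rho> * (D t)\<^sup>2"
    using W_gain_pos[OF c_pos rho_pos] mult_left_mono by (fastforce simp: mult.assoc intro: add_increasing2)
  with t assms W_deriv[of t]
  show "((\<lambda>t. W t - W_crit c \<rho>) has_real_derivative
        W_gain c \<rho> * D t * (W t - W_crit c \<rho>) + W_gain c \<rho> * W_crit c \<rho> * (D t)\<^sup>2) (at t)
      \<and> W_gain c \<rho> * (W t - W_crit c \<rho>) \<le>
        W_gain c \<rho> * D t * (W t - W_crit c \<rho>) + W_gain c \<rho> * W_crit c \<rho> * (D t)\<^sup>2"
    by (auto intro!: derivative_eq_intros)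
qed (use assms in auto)

lemma W_nonneg_preserved:
  assumes "1 \<le> \<rho>" "0 \<le> s" "s \<le> r" "r \<le> T" "0 \<le> W s"
    and box: "\<And>t. t \<in> {s<..<r} \<Longrightarrow> 0 \<le> D t \<and> D t \<le> 1"
  shows "\<forall>t\<in>{s..r}. 0 \<le> W t"
proof (rule nonneg_barrier[where y = W and K = "W_gain c \<rho>", OF assms(3) finite_disc _ assms(5)])
  show "continuous_on {s..r} W"
    using continuous_W assms by (auto intro: continuous_on_subset)
  fix t assume t: "t \<in> {s<..<r} - disc a" "W t < 0"
  have "W_crit c \<rho> \<le> 0"
    using W_crit_sign(3)[OF c_pos rho_pos assms(1)] .
  then have "W_crit c \<rho> * (D t * (1 - D t)) \<le> 0"
    using box[of t] t by (intro mult_nonpos_nonneg) auto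
  moreover have "W t \<le> D t * W t"
    using box[of t] t by (simp add: mult_le_cancel_right2)
  ultimately have "W t \<le> D t * W t - W_crit c \<rho> * (D t * (1 - D t))"
    by linarith
  then have "W_gain c \<rho> * W t \<le> W_gain c \<rho> * (D t * W t - W_crit c \<rho> * (D t * (1 - D t)))"
    using W_gain_pos[OF c_pos rho_pos] by (intro mult_left_mono) auto
  also have "\<dots> = W_gain c \<rho> * D t * (W t - W_crit c \<rho>) + W_gain c \<rho> * W_crit c \<rho> * (D t)\<^sup>2"
    by (simp add: algebra_simps power2_eq_square)
  finally have "W_gain c \<rho> * W t \<le>
      W_gain c \<rho> * D t * (W t - W_crit c \<rho>) + W_gain c \<rho> * W_crit c \<rho> * (D t)\<^sup>2" .
  with t assms W_deriv[of t]
  show "(W has_real_derivative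
        W_gain c \<rho> * D t * (W t - W_crit c \<rho>) + W_gain c \<rho> * W_crit c \<rho> * (D t)\<^sup>2) (at t)
      \<and> W_gain c \<rho> * W t \<le>
        W_gain c \<rho> * D t * (W t - W_crit c \<rho>) + W_gain c \<rho> * W_crit c \<rho> * (D t)\<^sup>2"
    by auto
qed

lemma control_bound_nonneg:
  assumes "\<And>t. 0 < t \<Longrightarrow> a t \<le> M"
  shows "0 \<le> M"
  using assms[of 1] control_nonneg[of 1] by simp

lemma W_rises_while_D_negative:
  fixes \<delta> \<tau> r :: real
  defines "\<kappa> \<equiv> W_gain c \<rho> * W_crit c \<rho> * \<delta>\<^sup>2 / 4"
  assumes "\<rho> \<le> 1" "0 < r" "r \<le> T" "r \<le> \<tau>" "0 < \<delta>" "W_crit c \<rho> - \<kappa> * \<tau> \<le> W 0"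
    and D_neg: "\<And>t. t \<in> {0..r} \<Longrightarrow> D t \<le> - \<delta> / 2"
  shows "\<forall>t\<in>{0..r}. 0 \<le> W t - W_crit c \<rho> + \<kappa> * (\<tau> - t)"
proof (rule nonneg_barrier[where K = 0, OF less_imp_le[OF assms(3)] finite_disc])
  let ?\<gamma> = "W_gain c \<rho>" and ?w = "W_crit c \<rho>"
  have \<gamma>: "0 < ?\<gamma>" and w: "0 \<le> ?w"
    using W_gain_pos[OF c_pos rho_pos] W_crit_sign(1)[OF c_pos rho_pos assms(2)] by auto
  then have \<kappa>: "0 \<le> \<kappa>"
    unfolding \<kappa>_def by simp
  show "continuous_on {0..r} (\<lambda>t. W t - ?w + \<kappa> * (\<tau> - t))"
    using continuous_W assms by (auto intro!: continuous_intros intro: continuous_on_subset)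
  fix t assume t: "t \<in> {0<..<r} - disc a" "W t - ?w + \<kappa> * (\<tau> - t) < 0"
  have "0 \<le> \<kappa> * (\<tau> - t)"
    using \<kappa> assms t by simp
  then have "W t - ?w < 0"
    using t by linarith
  moreover have D_t: "D t \<le> - \<delta> / 2"
    using D_neg[of t] t by simp
  ultimately have "0 \<le> ?\<gamma> * (D t * (W t - ?w))"
    using assms \<gamma> by (simp add: mult_nonpos_nonpos)
  moreover have "(\<delta> / 2)\<^sup>2 \<le> (- D t)\<^sup>2"
    using D_t assms by (intro power_mono) auto
  moreover have "\<kappa> = ?\<gamma> * ?w * (\<delta> / 2)\<^sup>2"
    by (simp add: \<kappa>_def power_divide)
  \<comment> \<open>While \<open>D \<le> -\<delta>/2\<close>, the quadratic term of \<open>W'\<close> pushes \<open>W\<close> up at rate at least \<open>\<kappa>\<close>.\<close>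
  ultimately have "\<kappa> \<le> ?\<gamma> * D t * (W t - ?w) + ?\<gamma> * ?w * (D t)\<^sup>2"
    using \<gamma> w by (simp add: mult.assoc add_increasing mult_left_mono)
  with t assms W_deriv[of t]
  show "((\<lambda>t. W t - ?w + \<kappa> * (\<tau> - t)) has_real_derivative
        ?\<gamma> * D t * (W t - ?w) + ?\<gamma> * ?w * (D t)\<^sup>2 - \<kappa>) (at t)
      \<and> 0 * (W t - ?w + \<kappa> * (\<tau> - t)) \<le> ?\<gamma> * D t * (W t - ?w) + ?\<gamma> * ?w * (D t)\<^sup>2 - \<kappa>"
    by (auto intro!: derivative_eq_intros)
qed (use assms in simp)

lemma v_stays_positive:
  fixes M \<delta> \<tau> :: real
  defines "\<kappa> \<equiv> W_gain c \<rho> * W_crit c \<rho> * \<delta>\<^sup>2 / 4"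
  assumes rho_lt1: "\<rho> < 1" and control_le: "\<And>t. 0 < t \<Longrightarrow> a t \<le> M"
    and init: "u 0 \<in> {0..1}" "v 0 \<in> {0<..1}" "D 0 \<le> - \<delta>" "W_crit c \<rho> - \<kappa> * \<tau> \<le> W 0"
    and \<delta>: "0 < \<delta>"
    and \<tau>: "0 < \<tau>" "((1 + \<rho>) + (c + 1) * M) * \<tau> \<le> \<delta> / 2" "\<kappa> * \<tau> < W_crit c \<rho>"
  shows "0 < v T"
proof (rule ccontr)
  assume "\<not> 0 < v T"
  then have "v T \<le> 0"
    by simp
  then obtain T' where T': "0 < T'" "T' \<le> T" "v T' = 0" "0 \<le> u T'"
    and box: "\<And>t. t \<in> {0..<T'} \<Longrightarrow> u t \<in> {0..1} \<and> v t \<in> {0<..1}"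
    by (rule stays_in_box_until_v_vanishes[OF init(1,2)]) blast
  have box': "u t \<in> {0..1} \<and> v t \<in> {0..1}" if "t \<in> {0<..<T'}" for t
    using box[of t] that by auto
  let ?\<gamma> = "W_gain c \<rho>" and ?w = "W_crit c \<rho>"
  have \<gamma>: "0 < ?\<gamma>" and w: "0 < ?w"
    using W_gain_pos[OF c_pos rho_pos] W_crit_sign(2)[OF c_pos rho_pos rho_lt1] by auto
  have \<kappa>: "0 \<le> \<kappa>"
    unfolding \<kappa>_def using \<gamma> w by simp
  define \<tau>' where "\<tau>' = min \<tau> T'"
  have \<tau>': "0 < \<tau>'" "\<tau>' \<le> \<tau>" "\<tau>' \<le> T'"
    using \<tau> T' by (auto simp: \<tau>'_def)
  have D_neg: "D t \<le> - \<delta> / 2" if "t \<in> {0..\<tau>'}" for t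
  proof -
    have "D t \<le> D 0 + ((1 + \<rho>) + (c + 1) * M) * t"
      by (rule D_le_linear[of \<tau>']) (use that \<tau>' T' control_le box' in auto)
    moreover have "((1 + \<rho>) + (c + 1) * M) * t \<le> ((1 + \<rho>) + (c + 1) * M) * \<tau>"
      using that \<tau>' rho_pos c_pos control_bound_nonneg[OF control_le] by (intro mult_left_mono) auto
    ultimately show ?thesis
      using init(3) \<tau>(2) by linarith
  qed
  have W_rises: "\<forall>t\<in>{0..\<tau>'}. 0 \<le> W t - ?w + \<kappa> * (\<tau> - t)"
    using W_rises_while_D_negative[OF less_imp_le[OF rho_lt1] _ _ _ \<delta> init(4)[unfolded \<kappa>_def]] D_neg
      \<tau>' T' unfolding \<kappa>_def by auto
  have "0 < v \<tau>'"
  proof -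
    have "\<kappa> * (\<tau> - \<tau>') \<le> \<kappa> * \<tau>"
      using \<kappa> \<tau>' by (simp add: mult_left_mono)
    moreover have "0 \<le> W \<tau>' - ?w + \<kappa> * (\<tau> - \<tau>')"
      using W_rises \<tau>' by simp
    ultimately have "0 < W \<tau>'"
      using \<tau>(3) by linarith
    moreover have "0 \<le> u \<tau>' / c"
      using u_sign_preserved(1)[of 0 \<tau>'] init \<tau>' T' c_pos by auto
    ultimately show ?thesis
      by (simp add: W_def)
  qed
  then have "\<tau>' \<noteq> T'"
    using T' by auto
  then have "\<tau>' = \<tau>" "\<tau> < T'"
    by (auto simp: \<tau>'_def min_def split: if_splits)
  moreover have "?w \<le> W \<tau>"
    using bspec[OF W_rises, of \<tau>] \<tau>' calculation by simp
  ultimately have "0 \<le> W t - ?w" if "t \<in> {\<tau>..T'}" for t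
    using W_ge_W_crit_preserved[OF less_imp_le[OF rho_lt1], of \<tau> T'] W_rises \<tau>' T' box' that
    by auto
  from this[of T'] have "?w \<le> - u T' / c"
    using \<open>\<tau> < T'\<close> T' by (simp add: W_def)
  moreover have "0 \<le> u T' / c"
    using T' c_pos by simp
  ultimately show False
    using w by linarith
qed

lemma W_rises_while_D_in_layer:
  fixes \<mu> \<tau> r :: real
  defines "\<kappa> \<equiv> W_gain c \<rho> * (- W_crit c \<rho>) * \<mu> / 4"
  assumes rho_ge1: "1 \<le> \<rho>" and r: "0 < r" "r \<le> T" "r \<le> \<tau>" and \<tau>: "W_gain c \<rho> * \<tau> \<le> 1"
    and \<mu>: "0 \<le> \<mu>" and W0: "- (\<kappa> / 2 * \<tau>) \<le> W 0"
    and layer: "\<And>t. t \<in> {0..r} \<Longrightarrow> 1 / 4 \<le> D t \<and> D t \<le> 1 \<and> \<mu> \<le> 1 - D t"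
  shows "\<forall>t\<in>{0..r}. 0 \<le> W t + \<kappa> / 2 * (\<tau> - t)"
proof (rule nonneg_barrier[where K = "W_gain c \<rho>", OF less_imp_le[OF r(1)] finite_disc])
  let ?\<gamma> = "W_gain c \<rho>" and ?w = "W_crit c \<rho>"
  have \<gamma>: "0 < ?\<gamma>" and w: "0 \<le> - ?w"
    using W_gain_pos[OF c_pos rho_pos] W_crit_sign(3)[OF c_pos rho_pos rho_ge1] by auto
  then have \<kappa>: "0 \<le> \<kappa>"
    unfolding \<kappa>_def using \<mu> by (intro divide_nonneg_pos mult_nonneg_nonneg) auto
  show "continuous_on {0..r} (\<lambda>t. W t + \<kappa> / 2 * (\<tau> - t))"
    using continuous_W r by (auto intro!: continuous_intros intro: continuous_on_subset)
  fix t assume t: "t \<in> {0<..<r} - disc a" "W t + \<kappa> / 2 * (\<tau> - t) < 0"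
  have "0 \<le> \<kappa> / 2 * (\<tau> - t)"
    using \<kappa> r t by simp
  then have "W t < 0"
    using t by linarith
  have D_t: "1 / 4 \<le> D t" "D t \<le> 1" "\<mu> \<le> 1 - D t"
    using layer[of t] t by auto
  then have "W t \<le> D t * W t"
    using \<open>W t < 0\<close> by (simp add: mult_le_cancel_right2)
  then have "?\<gamma> * W t \<le> ?\<gamma> * (D t * W t)"
    using \<gamma> by simp
  moreover have "1 / 4 * \<mu> \<le> D t * (1 - D t)"
    using D_t \<mu> by (intro mult_mono) auto
  then have "?\<gamma> * (- ?w) * (1 / 4 * \<mu>) \<le> ?\<gamma> * (- ?w) * (D t * (1 - D t))"
    using \<gamma> w by (intro mult_left_mono mult_nonneg_nonneg) auto
  then have "\<kappa> \<le> ?\<gamma> * (- ?w) * (D t * (1 - D t))"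
    by (simp add: \<kappa>_def)
  moreover have "?\<gamma> * (\<tau> - t) \<le> ?\<gamma> * \<tau>"
    using \<gamma> t by (intro mult_left_mono) auto
  then have "?\<gamma> * (\<kappa> / 2 * (\<tau> - t)) \<le> \<kappa> / 2"
    using \<kappa> \<tau> mult_left_mono[of "?\<gamma> * (\<tau> - t)" 1 "\<kappa> / 2"] by (simp add: algebra_simps)
  moreover have "?\<gamma> * D t * (W t - ?w) + ?\<gamma> * ?w * (D t)\<^sup>2
      = ?\<gamma> * (D t * W t) + ?\<gamma> * (- ?w) * (D t * (1 - D t))"
    by (simp add: algebra_simps power2_eq_square)
  \<comment> \<open>In the layer, \<open>W' = \<gamma> D W + \<gamma> (-W\<^sup>*) D (1 - D) \<ge> \<gamma> W + \<kappa>\<close>.\<close>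
  ultimately have "?\<gamma> * (W t + \<kappa> / 2 * (\<tau> - t)) \<le>
      ?\<gamma> * D t * (W t - ?w) + ?\<gamma> * ?w * (D t)\<^sup>2 - \<kappa> / 2"
    by (simp add: distrib_left)
  with t r W_deriv[of t]
  show "((\<lambda>t. W t + \<kappa> / 2 * (\<tau> - t)) has_real_derivative
        ?\<gamma> * D t * (W t - ?w) + ?\<gamma> * ?w * (D t)\<^sup>2 - \<kappa> / 2) (at t)
      \<and> ?\<gamma> * (W t + \<kappa> / 2 * (\<tau> - t)) \<le> ?\<gamma> * D t * (W t - ?w) + ?\<gamma> * ?w * (D t)\<^sup>2 - \<kappa> / 2"
    by (auto intro!: derivative_eq_intros)
qed (use W0 in simp)

lemma u_vanishes_with_v:
  fixes M \<tau> :: real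
  defines "\<kappa> \<equiv> W_gain c \<rho> * (- W_crit c \<rho>) * u 0 / 8"
  assumes rho_gt1: "1 < \<rho>" and control_le: "\<And>t. 0 < t \<Longrightarrow> a t \<le> M"
    and init: "u 0 \<in> {0<..1}" "v 0 \<in> {0<..1}" "1 / 2 \<le> D 0" "- (\<kappa> / 2 * \<tau>) \<le> W 0"
    and \<tau>: "0 < \<tau>" "(1 + \<rho>) * \<tau> \<le> 1 / 4" "c * M * \<tau> \<le> u 0 / 2" "W_gain c \<rho> * \<tau> \<le> 1"
    and \<kappa>\<tau>: "\<kappa> * \<tau> < u 0 / c" and "v T \<le> 0"
  shows "u T = 0"
proof -
  obtain T' where T': "0 < T'" "T' \<le> T" "v T' = 0" "0 \<le> u T'"
    and box: "\<And>t. t \<in> {0..<T'} \<Longrightarrow> u t \<in> {0..1} \<and> v t \<in> {0<..1}"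
    by (rule stays_in_box_until_v_vanishes[OF _ init(2) \<open>v T \<le> 0\<close>]) (use init(1) in auto)
  have box': "u t \<in> {0..1} \<and> v t \<in> {0..1}" if "t \<in> {0<..<T'}" for t
    using box[of t] that by auto
  have D_nonneg: "\<forall>t\<in>{0..T'}. 0 \<le> D t"
    using D_nonneg_preserved[of T'] T' init(3) box' by auto
  have D_le1: "D t \<le> 1" if "t \<in> {0..T'}" for t
    using box[of t] T' that by (cases "t = T'") (auto simp: D_def)
  have \<kappa>: "0 \<le> \<kappa>"
    unfolding \<kappa>_def using W_gain_pos[OF c_pos rho_pos] W_crit_sign(4)[OF c_pos rho_pos rho_gt1] init(1)
    by (intro divide_nonneg_pos mult_nonneg_nonneg) auto
  define \<tau>' where "\<tau>' = min \<tau> T'"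
  have \<tau>': "0 < \<tau>'" "\<tau>' \<le> \<tau>" "\<tau>' \<le> T'"
    using \<tau> T' by (auto simp: \<tau>'_def)
  have layer: "1 / 4 \<le> D t \<and> D t \<le> 1 \<and> u 0 / 2 \<le> u t \<and> u t \<le> 1 - D t"
    if "t \<in> {0..\<tau>'}" for t
  proof -
    have "D 0 - (1 + \<rho>) * t \<le> D t"
      by (rule D_ge_linear[of \<tau>']) (use that \<tau>' T' box' in auto)
    moreover have "u 0 - c * M * t \<le> u t"
      by (rule u_ge_linear[of \<tau>']) (use that \<tau>' T' control_le box' D_nonneg in auto)
    moreover have "(1 + \<rho>) * t \<le> (1 + \<rho>) * \<tau>" "c * M * t \<le> c * M * \<tau>"
      using that \<tau>' rho_gt1 c_pos control_bound_nonneg[OF control_le] by (auto intro!: mult_left_mono)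
    moreover have "0 \<le> v t"
      using box[of t] T' \<tau>' that by (cases "t = T'") auto
    ultimately show ?thesis
      using D_le1[of t] that \<tau>' init \<tau> by (auto simp: D_def)
  qed
  have W_rises: "\<forall>t\<in>{0..\<tau>'}. 0 \<le> W t + \<kappa> / 2 * (\<tau> - t)"
    using W_rises_while_D_in_layer[of \<tau>' \<tau> "u 0 / 2"] rho_gt1 \<tau>' T' \<tau> init layer
    unfolding \<kappa>_def by (force simp: algebra_simps)
  have "0 < v \<tau>'"
  proof -
    have "\<kappa> / 2 * (\<tau> - \<tau>') \<le> \<kappa> / 2 * \<tau>"
      using \<kappa> \<tau>' by (simp add: mult_left_mono)
    moreover have "0 \<le> W \<tau>' + \<kappa> / 2 * (\<tau> - \<tau>')"
      using W_rises \<tau>' by simp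
    moreover have "u 0 / 2 \<le> u \<tau>'"
      using layer[of \<tau>'] \<tau>' by simp
    then have "u 0 / 2 / c \<le> u \<tau>' / c"
      using c_pos by (intro divide_right_mono) auto
    moreover have "W \<tau>' = v \<tau>' - u \<tau>' / c" "u 0 / 2 / c = (u 0 / c) / 2" "\<kappa> / 2 * \<tau> = (\<kappa> * \<tau>) / 2"
      by (simp_all add: W_def)
    ultimately show ?thesis
      using \<kappa>\<tau> by linarith
  qed
  then have "\<tau>' \<noteq> T'"
    using T' by auto
  then have "\<tau>' = \<tau>" "\<tau> < T'"
    by (auto simp: \<tau>'_def min_def split: if_splits)
  moreover have "0 \<le> W \<tau>"
    using bspec[OF W_rises, of \<tau>] \<tau>' calculation by simp
  ultimately have "0 \<le> W T'"
    using W_nonneg_preserved[OF less_imp_le[OF rho_gt1], of \<tau> T'] D_nonneg D_le1 \<tau>' T' by auto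
  then have "u T' = 0"
    using T' c_pos by (simp add: W_def divide_le_0_iff)
  then show ?thesis
    using u_sign_preserved[of T' T] u_sign_preserved(1)[of 0 T] T' init(1) by fastforce
qed

end

section \<open>Realising curves by admissible controls\<close>

lemma disc_truncated_control:
  assumes "\<And>t. t \<in> {0..T} \<Longrightarrow> isCont A t"
  shows "disc (\<lambda>t. if t \<le> T then A t else 0) \<subseteq> {T}"
proof
  fix t assume t: "t \<in> disc (\<lambda>t. if t \<le> T then A t else 0)"
  show "t \<in> {T}"
  proof (rule ccontr)
    assume "t \<notin> {T}"
    have "isCont (\<lambda>t. if t \<le> T then A t else 0) t"
    proof (cases "t < T")
      case True
      then have "\<forall>\<^sub>F x in nhds t. A x = (if x \<le> T then A x else 0)"
        by (auto intro: eventually_mono[OF eventually_nhds_in_open[of "{..<T}"]])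
      with assms[of t] t True show ?thesis
        using isCont_cong by (fastforce simp: disc_def)
    next
      case False
      with \<open>t \<notin> {T}\<close> have "\<forall>\<^sub>F x in nhds t. 0 = (if x \<le> T then A x else 0)"
        by (auto intro: eventually_mono[OF eventually_nhds_in_open[of "{T<..}"]])
      then show ?thesis
        using isCont_cong continuous_const by fastforce
    qed
    with t show False
      by (auto simp: disc_def continuous_at_imp_continuous_at_within)
  qed
qed

text \<open>A curve satisfying the control-free equation for \<open>v - u / c\<close> is a solution for the
  control read off from the equation for \<open>u\<close>, extended by \<open>0\<close> after time \<open>T\<close>.\<close>
lemma reachable_by_admissible_control:
  fixes u v u' v' :: "real \<Rightarrow> real" and c \<rho> T :: real
  assumes c: "0 < c" and \<rho>: "0 < \<rho>" and T: "0 < T"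
    and deriv: "\<And>t. t \<in> {0..T} \<Longrightarrow>
      (u has_real_derivative u' t) (at t) \<and> (v has_real_derivative v' t) (at t)"
    and cont: "\<And>t. t \<in> {0..T} \<Longrightarrow> isCont u' t"
    and u_pos: "\<And>t. t \<in> {0..T} \<Longrightarrow> 0 < u t"
    and W_eq: "\<And>t. t \<in> {0..T} \<Longrightarrow> v' t - u' t / c =
      W_gain c \<rho> * (1 - u t - v t) * (v t - u t / c - W_crit c \<rho>)
      + W_gain c \<rho> * W_crit c \<rho> * (1 - u t - v t)\<^sup>2"
    and control_nonneg: "\<And>t. t \<in> {0..T} \<Longrightarrow> u' t \<le> u t * (1 - u t - v t)"
    and stop: "v T = 0"
    and init: "u 0 \<in> {0..1}" "v 0 \<in> {0..1}" "(u 0, v 0) \<noteq> (0, 0)"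
  shows "(u 0, v 0) \<in> V_set c \<rho> admissible"
proof -
  define A where "A t = ((1 - u t - v t) - u' t / u t) / c" for t
  define a where "a t = (if t \<le> T then A t else 0)" for t
  have "isCont A t" if "t \<in> {0..T}" for t
  proof -
    have "isCont u t" "isCont v t"
      using deriv[OF that] by (auto intro: DERIV_isCont)
    then show ?thesis
      unfolding A_def[abs_def] using cont[OF that] u_pos[OF that] c
      by (auto intro!: continuous_intros)
  qed
  then have "disc a \<subseteq> {T}"
    unfolding a_def[abs_def] by (rule disc_truncated_control)
  moreover have "0 \<le> a t" if "0 \<le> t" for t
  proof (cases "t \<le> T")
    case True
    with that have "u' t / u t \<le> 1 - u t - v t"
      using control_nonneg[of t] u_pos[of t] by (simp add: divide_le_eq mult.commute)
    with True c show ?thesis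
      by (simp add: a_def A_def)
  qed (simp add: a_def)
  ultimately have admissible: "a \<in> admissible"
    by (auto simp: admissible_def finite_subset)
  have u_eq: "u' t = u t * (1 - u t - v t) - a t * c * u t" if "t \<in> {0..T}" for t
  proof -
    have "a t * c = (1 - u t - v t) - u' t / u t"
      using that c by (simp add: a_def A_def)
    then have "a t * c * u t = (1 - u t - v t) * u t - u' t"
      using u_pos[OF that] by (simp add: left_diff_distrib)
    then show ?thesis
      by (simp add: algebra_simps)
  qed
  have "solves_on c \<rho> a T u v"
    unfolding solves_on_def
  proof (intro conjI allI impI)
    show "continuous_on {0..T} u" "continuous_on {0..T} v"
      using deriv by (meson DERIV_isCont atLeastAtMost_iff continuous_at_imp_continuous_on)+
    fix t assume t: "0 < t \<and> t < T \<and> t \<notin> disc a"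
    then have t': "t \<in> {0..T}"
      by simp
    show "(u has_real_derivative u t * (1 - u t - v t) - a t * c * u t) (at t)"
      using deriv[OF t'] u_eq[OF t'] by simp
    have "(\<rho> * v t * (1 - u t - v t) - a t * u t) - u' t / c = v' t - u' t / c"
      using W_deriv_identity[OF c \<rho>, of "v t" "u t" "a t"] W_eq[OF t']
      unfolding u_eq[OF t', symmetric] by simp
    then have "v' t = \<rho> * v t * (1 - u t - v t) - a t * u t"
      by simp
    then show "(v has_real_derivative \<rho> * v t * (1 - u t - v t) - a t * u t) (at t)"
      using deriv[OF t'] by simp
  qed
  then have "(u 0, v 0) \<in> E_set c \<rho> a"
    using init stop u_pos[of T] T unfolding E_set_def by (auto intro!: exI[of _ T])
  with admissible show ?thesis
    unfolding V_set_def by auto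
qed

text \<open>Coordinates \<open>D = 1 - u - v\<close> and \<open>g = \<rho> v - u / c\<close>, in which the equation for
  \<open>v - u / c\<close> becomes \<open>g' = W_gain c \<rho> * D * g + (1 - \<rho>) * D' / (c + 1)\<close>.\<close>
definition u_of :: "real \<Rightarrow> real \<Rightarrow> real \<Rightarrow> real \<Rightarrow> real" where
  "u_of c \<rho> D g = c * (\<rho> * (1 - D) - g) / (\<rho> * c + 1)"

definition v_of :: "real \<Rightarrow> real \<Rightarrow> real \<Rightarrow> real \<Rightarrow> real" where
  "v_of c \<rho> D g = (1 - D + c * g) / (\<rho> * c + 1)"

lemma Dg_coordinates:
  fixes c \<rho> D g :: real
  assumes "0 < c" "0 < \<rho>"
  shows "1 - u_of c \<rho> D g - v_of c \<rho> D g = D"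
    and "W_gain c \<rho> * D * (v_of c \<rho> D g - u_of c \<rho> D g / c - W_crit c \<rho>)
      + W_gain c \<rho> * W_crit c \<rho> * D\<^sup>2 = D * g"
proof -
  define K L where "K = \<rho> * c + 1" and "L = c + 1"
  have "0 < \<rho> * c"
    using assms by simp
  then have K: "K \<noteq> 0" "L \<noteq> 0" "c \<noteq> 0"
    using assms unfolding K_def L_def by linarith+
  have defs: "u_of c \<rho> D g = c * (\<rho> * (1 - D) - g) / K" "v_of c \<rho> D g = (1 - D + c * g) / K"
    "W_gain c \<rho> = K / L" "W_crit c \<rho> = (1 - \<rho>) / K"
    by (simp_all add: K_def L_def u_of_def v_of_def W_gain_def W_crit_def add.commute)
  show "1 - u_of c \<rho> D g - v_of c \<rho> D g = D"
    unfolding defs using K by (simp add: field_simps; (simp only: K_def L_def)?; algebra)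
  show "W_gain c \<rho> * D * (v_of c \<rho> D g - u_of c \<rho> D g / c - W_crit c \<rho>)
      + W_gain c \<rho> * W_crit c \<rho> * D\<^sup>2 = D * g"
    unfolding defs using K
    by (simp add: field_simps power2_eq_square; (simp only: K_def L_def)?; algebra)
qed

lemma reachable_by_admissible_control_Dg:
  fixes D g D' g' :: "real \<Rightarrow> real" and c \<rho> T :: real
  assumes c: "0 < c" and \<rho>: "0 < \<rho>" and T: "0 < T"
    and deriv: "\<And>t. t \<in> {0..T} \<Longrightarrow>
      (D has_real_derivative D' t) (at t) \<and> (g has_real_derivative g' t) (at t)"
    and cont: "\<And>t. t \<in> {0..T} \<Longrightarrow> isCont D' t \<and> isCont g' t"
    and g_eq: "\<And>t. t \<in> {0..T} \<Longrightarrow> g' t = W_gain c \<rho> * D t * g t + (1 - \<rho>) * D' t / (c + 1)"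
    and u_pos: "\<And>t. t \<in> {0..T} \<Longrightarrow> 0 < \<rho> * (1 - D t) - g t"
    and control_nonneg: "\<And>t. t \<in> {0..T} \<Longrightarrow>
      0 \<le> (\<rho> * c + 1) * D' t + \<rho> * (c + 1) * D t * (1 - D t) + c * (\<rho> - 1) * D t * g t"
    and stop: "1 - D T + c * g T = 0"
    and init: "u_of c \<rho> (D 0) (g 0) \<in> {0..1}" "v_of c \<rho> (D 0) (g 0) \<in> {0..1}"
      "(u_of c \<rho> (D 0) (g 0), v_of c \<rho> (D 0) (g 0)) \<noteq> (0, 0)"
  shows "(u_of c \<rho> (D 0) (g 0), v_of c \<rho> (D 0) (g 0)) \<in> V_set c \<rho> admissible"
proof -
  define u v where "u t = u_of c \<rho> (D t) (g t)" and "v t = v_of c \<rho> (D t) (g t)" for t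
  define K L where "K = \<rho> * c + 1" and "L = c + 1"
  have K: "0 < K" "0 < L"
    using c \<rho> by (simp_all add: K_def L_def add_pos_pos)
  have coords: "\<And>x y. u_of c \<rho> x y = c * (\<rho> * (1 - x) - y) / K"
    "\<And>x y. v_of c \<rho> x y = (1 - x + c * y) / K" "W_gain c \<rho> = K / L"
    by (simp_all add: K_def L_def u_of_def v_of_def W_gain_def)
  define u' where "u' t = - c * (\<rho> * D' t + g' t) / K" for t
  define v' where "v' t = (c * g' t - D' t) / K" for t
  have "(u 0, v 0) \<in> V_set c \<rho> admissible"
  proof (rule reachable_by_admissible_control[OF c \<rho> T, of u u' v v'])
    fix t assume t: "t \<in> {0..T}"
    show "(u has_real_derivative u' t) (at t) \<and> (v has_real_derivative v' t) (at t)"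
      using deriv[OF t] K unfolding u_def[abs_def] v_def[abs_def] u'_def v'_def coords
      by (auto intro!: derivative_eq_intros simp: field_simps)
    show "isCont u' t"
      using cont[OF t] K unfolding u'_def[abs_def] by (auto intro!: continuous_intros)
    show "0 < u t"
      using u_pos[OF t] c K by (simp add: u_def coords)
    have "v' t - u' t / c = D t * g t"
      using c K unfolding u'_def v'_def g_eq[OF t] coords L_def[symmetric]
      by (simp add: field_simps; (simp only: K_def L_def)?; algebra)
    then show "v' t - u' t / c = W_gain c \<rho> * (1 - u t - v t) * (v t - u t / c - W_crit c \<rho>)
        + W_gain c \<rho> * W_crit c \<rho> * (1 - u t - v t)\<^sup>2"
      by (simp add: u_def v_def Dg_coordinates[OF c \<rho>])
    have "u t * (1 - u t - v t) - u' t
        = c * ((\<rho> * c + 1) * D' t + \<rho> * (c + 1) * D t * (1 - D t) + c * (\<rho> - 1) * D t * g t)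
          / (K * L)"
      using c K unfolding u_def v_def Dg_coordinates[OF c \<rho>] u'_def g_eq[OF t] coords L_def[symmetric]
      by (simp add: field_simps; (simp only: K_def L_def)?; algebra)
    moreover have "0 \<le> c * ((\<rho> * c + 1) * D' t + \<rho> * (c + 1) * D t * (1 - D t)
        + c * (\<rho> - 1) * D t * g t) / (K * L)"
      using control_nonneg[OF t] c K by (intro divide_nonneg_pos mult_nonneg_nonneg) auto
    ultimately show "u' t \<le> u t * (1 - u t - v t)"
      by linarith
  qed (use stop init K in \<open>simp_all add: u_def v_def coords\<close>)
  then show ?thesis
    by (simp add: u_def v_def)
qed

section \<open>An explicit reachable point for \<open>\<rho> > 1\<close>\<close>

lemma exp_curve_estimate:
  fixes \<rho> k s e \<Delta> :: real
  assumes "1 < \<rho>" "0 < k" "k \<le> 1 / 2" "(\<rho> - 1) * k < 2 * e"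
    and "0 \<le> s" "s \<le> (\<rho> - 1) / 2" "0 \<le> \<Delta>" "\<Delta> \<le> 1 / 2"
  shows "- e + s * (exp (k * \<Delta>) - 1) - (\<rho> - 1) / k * (exp (k * \<Delta>) - 1 - k * \<Delta>) < 0"
proof -
  have k\<Delta>: "0 \<le> k * \<Delta>" "k * \<Delta> \<le> 1 / 2 * 1"
    using assms by (simp, intro mult_mono, auto)
  then have "exp (k * \<Delta>) \<le> 1 + 2 * (k * \<Delta>)"
    using exp_bound_lemma[of "k * \<Delta>"] by simp
  then have "exp (k * \<Delta>) - 1 \<le> k"
    using assms mult_left_mono[of \<Delta> "1 / 2" k] by linarith
  then have "s * (exp (k * \<Delta>) - 1) \<le> (\<rho> - 1) / 2 * k"
    using assms k\<Delta> by (intro mult_mono) auto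
  moreover have "0 \<le> exp (k * \<Delta>) - 1 - k * \<Delta>"
    using exp_ge_add_one_self[of "k * \<Delta>"] by linarith
  then have "0 \<le> (\<rho> - 1) / k * (exp (k * \<Delta>) - 1 - k * \<Delta>)"
    using assms by simp
  ultimately show ?thesis
    using assms by linarith
qed

locale curve_rho_gt1 =
  fixes c \<rho> \<epsilon> :: real
  assumes c_pos: "0 < c" and rho_gt1: "1 < \<rho>" and eps_pos: "0 < \<epsilon>"
    and eps_le: "\<epsilon> \<le> (\<rho> - 1) / (4 * \<rho> * (c + 1))"
begin

definition "w = 1 / (2 * (c + 1))"
definition "D0 = 1 / 2 + \<epsilon>"
definition "g0 = (\<rho> - 1) * w - \<rho> * \<epsilon>"
definition "k = min (1 / 2) (\<epsilon> * (\<rho> * c + 1) / (2 * \<rho>))"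
definition "\<alpha> = (1 - \<rho>) / ((c + 1) * k)"

text \<open>\<open>D' = (W_gain c \<rho> / k) D\<close>, and \<open>g\<close> is the solution of the linear equation for \<open>g\<close> along it.\<close>
definition "D t = D0 * exp (W_gain c \<rho> * t / k)" for t
definition "g t = (g0 + \<alpha>) * exp (k * (D t - D0)) - \<alpha>" for t
definition "t_end = k / W_gain c \<rho> * ln (1 / D0)"

lemma parameters:
  shows "0 < w" "(c + 1) * w = 1 / 2" "0 < D0" "D0 < 1" "0 < k" "k \<le> 1 / 2"
    and "k \<le> \<epsilon> * (\<rho> * c + 1) / (2 * \<rho>)" "0 \<le> g0" "(c + 1) * g0 \<le> (\<rho> - 1) / 2"
    and "(1 - \<rho>) * (1 - D0) + (c + 1) * g0 = - \<epsilon> * (\<rho> * c + 1)"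
proof -
  have \<rho>: "0 < \<rho>" "0 < \<rho> * c" "0 < \<rho> * c + 1"
    using rho_gt1 c_pos by (simp_all add: add_pos_pos)
  show w: "0 < w" "(c + 1) * w = 1 / 2"
    using c_pos by (simp_all add: w_def)
  have "\<epsilon> \<le> (\<rho> - 1) * w / (2 * \<rho>)"
    using eps_le c_pos by (simp add: w_def field_simps)
  then have \<rho>\<epsilon>: "\<rho> * \<epsilon> \<le> (\<rho> - 1) * w / 2"
    using \<rho> by (simp add: field_simps)
  moreover have "(\<rho> - 1) * w / 2 < \<rho> * (1 / 4)"
    using rho_gt1 c_pos \<rho> by (simp add: w_def field_simps)
  ultimately have "\<rho> * \<epsilon> < \<rho> * (1 / 4)"
    by linarith
  then show "0 < D0" "D0 < 1"
    using eps_pos \<rho> by (simp_all add: D0_def)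
  show "0 < k" "k \<le> 1 / 2" "k \<le> \<epsilon> * (\<rho> * c + 1) / (2 * \<rho>)"
    using eps_pos \<rho> by (auto simp: k_def)
  have "0 < \<rho> * \<epsilon>" "0 < (c + 1) * (\<rho> * \<epsilon>)"
    using \<rho> eps_pos c_pos by simp_all
  moreover have "(c + 1) * g0 = (\<rho> - 1) * ((c + 1) * w) - (c + 1) * (\<rho> * \<epsilon>)"
    by (simp add: g0_def algebra_simps)
  then have g0_eq: "(c + 1) * g0 = (\<rho> - 1) / 2 - (c + 1) * (\<rho> * \<epsilon>)"
    unfolding w(2) by simp
  ultimately show "(c + 1) * g0 \<le> (\<rho> - 1) / 2"
    by linarith
  have "0 \<le> (\<rho> - 1) * w"
    using rho_gt1 w by simp
  with \<rho>\<epsilon> show "0 \<le> g0"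
    by (simp add: g0_def)
  show "(1 - \<rho>) * (1 - D0) + (c + 1) * g0 = - \<epsilon> * (\<rho> * c + 1)"
    unfolding g0_eq by (simp add: D0_def field_simps)
qed

lemma W_gain_pos': "0 < W_gain c \<rho>"
  using W_gain_pos c_pos rho_gt1 by simp

lemma t_end_pos: "0 < t_end"
  using parameters W_gain_pos' by (simp add: t_end_def)

lemma D_range:
  assumes "t \<in> {0..t_end}"
  shows "D0 \<le> D t" "D t \<le> 1"
proof -
  have "0 \<le> W_gain c \<rho> * t / k" "W_gain c \<rho> * t / k \<le> ln (1 / D0)"
    using assms parameters W_gain_pos' by (auto simp: t_end_def field_simps)
  then show "D0 \<le> D t" "D t \<le> 1"
    using parameters by (auto simp: D_def exp_le_cancel_iff[symmetric, of _ "ln (1 / D0)"] field_simps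
        simp del: exp_le_cancel_iff)
qed

lemma D_t_end: "D t_end = 1"
  using parameters W_gain_pos' by (simp add: D_def t_end_def)

lemma W_neg:
  assumes "t \<in> {0..t_end}"
  shows "(1 - \<rho>) * (1 - D t) + (c + 1) * g t < 0"
proof -
  define \<Delta> where "\<Delta> = D t - D0"
  define E where "E = exp (k * \<Delta>)"
  have g_t: "g t = (g0 + \<alpha>) * E - \<alpha>"
    by (simp add: g_def E_def \<Delta>_def)
  have "(1 - \<rho>) * (1 - D t) + (c + 1) * g t = ((1 - \<rho>) * (1 - D0) + (c + 1) * g0)
      + (c + 1) * g0 * (E - 1) + ((c + 1) * \<alpha>) * (E - 1) - (1 - \<rho>) * \<Delta>"
    by (simp add: g_t \<Delta>_def algebra_simps)
  also have "(c + 1) * \<alpha> = (1 - \<rho>) / k"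
    using parameters c_pos by (simp add: \<alpha>_def)
  also have "(1 - \<rho>) * (1 - D0) + (c + 1) * g0 + (c + 1) * g0 * (E - 1) + (1 - \<rho>) / k * (E - 1)
      - (1 - \<rho>) * \<Delta> = - (\<epsilon> * (\<rho> * c + 1))
      + (c + 1) * g0 * (exp (k * \<Delta>) - 1) - (\<rho> - 1) / k * (exp (k * \<Delta>) - 1 - k * \<Delta>)"
    unfolding parameters(10) using parameters(5) by (simp add: E_def field_simps)
  also have "\<dots> < 0"
  proof (rule exp_curve_estimate[OF rho_gt1 parameters(5,6) _ _ parameters(9)])
    have "(\<rho> - 1) * k \<le> (\<rho> - 1) * (\<epsilon> * (\<rho> * c + 1) / (2 * \<rho>))"
      using parameters rho_gt1 by (intro mult_left_mono) auto
    also have "\<dots> < 2 * (\<epsilon> * (\<rho> * c + 1))"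
      using rho_gt1 eps_pos c_pos by (simp add: field_simps add_pos_pos)
    finally show "(\<rho> - 1) * k < 2 * (\<epsilon> * (\<rho> * c + 1))" .
    show "0 \<le> (c + 1) * g0" "0 \<le> \<Delta>" "\<Delta> \<le> 1 / 2"
      using parameters D_range[OF assms] eps_pos c_pos by (auto simp: \<Delta>_def D0_def)
  qed
  finally show ?thesis .
qed

lemma K_pos: "0 < \<rho> * c + 1"
proof -
  have "0 < \<rho> * c"
    using c_pos rho_gt1 by (intro mult_pos_pos) auto
  then show ?thesis
    by simp
qed

lemma eps_less_w: "\<epsilon> < w"
proof -
  have "(\<rho> - 1) / (2 * \<rho>) < 1"
    using rho_gt1 by simp
  then have "(\<rho> - 1) / (2 * \<rho>) * w < 1 * w"
    using parameters(1) by (intro mult_strict_right_mono) auto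
  moreover have "(\<rho> - 1) / (4 * \<rho> * (c + 1)) = (\<rho> - 1) / (2 * \<rho>) * w"
    by (simp add: w_def)
  ultimately show ?thesis
    using eps_le by linarith
qed

lemma initial_coords:
  shows "\<rho> * (1 - D0) - g0 = (\<rho> * c + 1) * w" and "1 - D0 + c * g0 = (\<rho> * c + 1) * (w - \<epsilon>)"
proof -
  have D0_eq: "1 - D0 = (c + 1) * w - \<epsilon>"
    using parameters(2) by (simp add: D0_def)
  show "\<rho> * (1 - D0) - g0 = (\<rho> * c + 1) * w" "1 - D0 + c * g0 = (\<rho> * c + 1) * (w - \<epsilon>)"
    unfolding D0_eq by (simp_all add: g0_def algebra_simps)
qed

lemma initial_values: "u_of c \<rho> (D 0) (g 0) = c * w" "v_of c \<rho> (D 0) (g 0) = w - \<epsilon>"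
  using initial_coords K_pos by (simp_all add: D_def g_def u_of_def v_of_def)

lemma stopping_time:
  obtains T where "0 < T" "T \<le> t_end" "1 - D T + c * g T = 0"
    and "\<And>t. t \<in> {0..T} \<Longrightarrow> 0 \<le> 1 - D t + c * g t"
proof -
  define v_num where "v_num t = 1 - D t + c * g t" for t
  have "v_num 0 = (\<rho> * c + 1) * (w - \<epsilon>)"
    using initial_coords(2) by (simp add: v_num_def D_def g_def)
  then have start: "0 < v_num 0"
    using K_pos eps_less_w by simp
  have stop: "v_num t_end < 0"
    using W_neg[of t_end] t_end_pos c_pos by (simp add: v_num_def D_t_end mult_less_0_iff)
  have "continuous_on {0..t_end} v_num"
    unfolding v_num_def[abs_def] D_def[abs_def] g_def[abs_def]
    using parameters(5) by (intro continuous_intros) auto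
  then obtain T where T: "0 < T" "T \<le> t_end" "v_num T = 0"
    and v_pos: "\<And>t. t \<in> {0..<T} \<Longrightarrow> 0 < v_num t"
    by (rule first_root[OF _ start less_imp_le[OF stop] less_imp_le[OF t_end_pos]]) blast
  have "0 \<le> v_num t" if "t \<in> {0..T}" for t
    using v_pos[of t] T that by (cases "t = T") auto
  with T that show thesis
    by (simp add: v_num_def)
qed

definition "D' t = W_gain c \<rho> / k * D t" for t
definition "g' t = (g t + \<alpha>) * (k * D' t)" for t

lemma D_g_deriv: "(D has_real_derivative D' t) (at t) \<and> (g has_real_derivative g' t) (at t)"
  using parameters(5) unfolding D_def[abs_def] g_def[abs_def] D'_def g'_def
  by (auto intro!: derivative_eq_intros simp: algebra_simps)

lemma D'_g'_continuous: "isCont D' t \<and> isCont g' t"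
  using parameters(5) unfolding D'_def[abs_def] g'_def[abs_def] D_def[abs_def] g_def[abs_def]
  by (auto intro!: continuous_intros)

lemma g_relation: "g' t = W_gain c \<rho> * D t * g t + (1 - \<rho>) * D' t / (c + 1)"
proof -
  have kD: "k * D' t = W_gain c \<rho> * D t" and \<alpha>k: "\<alpha> * k = (1 - \<rho>) / (c + 1)"
    using parameters(5) c_pos by (simp_all add: D'_def \<alpha>_def)
  have "g' t = (g t + \<alpha>) * (W_gain c \<rho> * D t)"
    unfolding g'_def kD ..
  also have "\<dots> = W_gain c \<rho> * D t * g t + \<alpha> * (k * D' t)"
    unfolding kD by (simp add: algebra_simps)
  also have "\<alpha> * (k * D' t) = (1 - \<rho>) * D' t / (c + 1)"
    unfolding mult.assoc[symmetric] \<alpha>k by simp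
  finally show ?thesis .
qed

lemma control_numerator_nonneg:
  assumes "t \<in> {0..t_end}" "0 \<le> 1 - D t + c * g t"
  shows "0 \<le> (\<rho> * c + 1) * D' t + \<rho> * (c + 1) * D t * (1 - D t) + c * (\<rho> - 1) * D t * g t"
proof -
  have D: "0 \<le> D t" "D t \<le> 1" "0 \<le> D' t"
    using D_range[OF assms(1)] parameters W_gain_pos' by (auto simp: D'_def)
  have "(\<rho> - 1) * D t * (- (1 - D t)) \<le> (\<rho> - 1) * D t * (c * g t)"
    using D rho_gt1 assms(2) by (intro mult_left_mono) auto
  moreover have "0 \<le> (\<rho> * c + 1) * D' t + (\<rho> * c + 1) * (D t * (1 - D t))"
    using D K_pos by simp
  ultimately show ?thesis
    by (simp add: algebra_simps)
qed

lemma reachable: "(c * w, w - \<epsilon>) \<in> V_set c \<rho> admissible"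
proof -
  obtain T where T: "0 < T" "T \<le> t_end" "1 - D T + c * g T = 0"
    and v_nonneg: "\<And>t. t \<in> {0..T} \<Longrightarrow> 0 \<le> 1 - D t + c * g t"
    using stopping_time by blast
  have "(u_of c \<rho> (D 0) (g 0), v_of c \<rho> (D 0) (g 0)) \<in> V_set c \<rho> admissible"
  proof (rule reachable_by_admissible_control_Dg[where D' = D' and g' = g', OF c_pos _ T(1)])
    fix t assume t: "t \<in> {0..T}"
    then have t': "t \<in> {0..t_end}"
      using T by auto
    have "\<rho> * (1 - D t) - g t = (1 - D t + c * g t) - ((1 - \<rho>) * (1 - D t) + (c + 1) * g t)"
      by (simp add: algebra_simps)
    then show "0 < \<rho> * (1 - D t) - g t"
      using v_nonneg[OF t] W_neg[OF t'] by linarith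
    show "0 \<le> (\<rho> * c + 1) * D' t + \<rho> * (c + 1) * D t * (1 - D t) + c * (\<rho> - 1) * D t * g t"
      using control_numerator_nonneg[OF t' v_nonneg[OF t]] .
  next
    have "c * w \<le> 1" "w \<le> 1"
      using c_pos by (simp_all add: w_def field_simps)
    then show "u_of c \<rho> (D 0) (g 0) \<in> {0..1}" "v_of c \<rho> (D 0) (g 0) \<in> {0..1}"
      "(u_of c \<rho> (D 0) (g 0), v_of c \<rho> (D 0) (g 0)) \<noteq> (0, 0)"
      unfolding initial_values using parameters(1) eps_less_w eps_pos c_pos by auto
  qed (use rho_gt1 T D_g_deriv D'_g'_continuous g_relation in auto)
  with initial_values show ?thesis
    by simp
qed

end

section \<open>An explicit reachable point for \<open>\<rho> < 1\<close>\<close>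

locale curve_rho_lt1 =
  fixes c \<rho> \<epsilon> :: real
  assumes c_pos: "0 < c" and rho_pos: "0 < \<rho>" and rho_lt1: "\<rho> < 1"
    and eps_pos: "0 < \<epsilon>" and eps_le: "\<epsilon> \<le> 1 / (4 * c)"
begin

abbreviation "\<gamma> \<equiv> W_gain c \<rho>"

definition "\<delta> = \<rho> * c / (2 * (1 + c\<^sup>2))"
definition "A = (c + 1) / (1 - \<rho>)"
definition "\<eta> = \<gamma> * \<epsilon>"
definition "B = \<delta> / \<eta> + 1"
definition "K = (c + 1) * (1 + B * \<eta>) + c * (1 + B) * \<eta>"
definition "\<mu> = B * K"

text \<open>\<open>\<Phi>\<close> is the primitive of \<open>\<theta> + \<theta>\<^sup>2 / A\<close> vanishing at \<open>0\<close>, so that \<open>R' = - \<gamma> \<theta> (1 + \<theta> / A)\<close>.\<close>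
definition "w t = 1 + \<mu> * t" for t
definition "\<theta> t = - 1 + B / (w t)\<^sup>2" for t
definition "\<theta>' t = - 2 * B * \<mu> / (w t) ^ 3" for t
definition "\<Phi> t = - (1 - 1 / A) * t + B / \<mu> * (1 - 1 / w t) * (1 - 2 / A)
  + B\<^sup>2 / (3 * \<mu> * A) * (1 - 1 / (w t) ^ 3)" for t
definition "R t = - 1 / \<eta> - \<gamma> * \<Phi> t" for t
definition "R' t = - \<gamma> * (\<theta> t + (\<theta> t)\<^sup>2 / A)" for t

text \<open>For the curve \<open>D = \<theta> / R\<close>, \<open>g = (1 + \<theta> / A) / R\<close> defined below, \<open>1 - D + c g = F / R\<close>.\<close>
definition "F t = R t + c * (1 + \<theta> t / A) - \<theta> t" for t

lemma parameters:
  shows "0 < \<delta>" "\<delta> \<le> 1 / 4" "c * \<delta> \<le> 1 / 2" "\<delta> \<le> \<rho> * c" "1 < A" "c < A"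
    and "0 < \<gamma>" "\<gamma> \<le> 1" "0 < \<eta>" "c * \<eta> \<le> 1 / 4" "1 < B" "0 < K" "0 < \<mu>"
proof -
  have c2: "0 < 1 + c\<^sup>2"
    by (simp add: add_pos_nonneg)
  have "0 \<le> (c - 1)\<^sup>2"
    by simp
  then have "2 * c \<le> 1 + c\<^sup>2"
    by (simp add: power2_eq_square algebra_simps)
  then have "c / (1 + c\<^sup>2) \<le> 1 / 2" "c * c / (1 + c\<^sup>2) \<le> 1"
    using c2 by (simp_all add: divide_le_eq power2_eq_square)
  moreover have "\<delta> = \<rho> / 2 * (c / (1 + c\<^sup>2))" "c * \<delta> = \<rho> / 2 * (c * c / (1 + c\<^sup>2))"
    by (simp_all add: \<delta>_def)
  ultimately have "\<delta> \<le> \<rho> / 2 * (1 / 2)" "c * \<delta> \<le> \<rho> / 2 * 1"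
    using rho_pos by (metis mult_left_mono less_eq_real_def half_gt_zero)+
  then show "\<delta> \<le> 1 / 4" "c * \<delta> \<le> 1 / 2"
    using rho_lt1 by linarith+
  show \<delta>: "0 < \<delta>"
    using c_pos rho_pos c2 by (simp add: \<delta>_def)
  show "\<delta> \<le> \<rho> * c"
    using c_pos rho_pos c2 by (simp add: \<delta>_def field_simps power2_eq_square)
  have "c * (1 - \<rho>) < c * 1"
    using c_pos rho_pos by (intro mult_strict_left_mono) auto
  then have "0 < 1 - \<rho>" "1 - \<rho> < c + 1" "c * (1 - \<rho>) < c + 1"
    using c_pos rho_pos rho_lt1 by linarith+
  then show "1 < A" "c < A"
    by (simp_all add: A_def less_divide_eq)
  show \<gamma>: "0 < \<gamma>"
    using W_gain_pos[OF c_pos rho_pos] .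
  have "\<rho> * c \<le> c"
    using c_pos rho_lt1 by simp
  then show "\<gamma> \<le> 1"
    using c_pos by (simp add: W_gain_def)
  then have "\<eta> \<le> \<epsilon>"
    using \<gamma> eps_pos by (simp add: \<eta>_def mult_left_le_one_le)
  then have "c * \<eta> \<le> c * \<epsilon>"
    using c_pos by (intro mult_left_mono) auto
  moreover have "c * \<epsilon> \<le> 1 / 4"
    using eps_le c_pos by (simp add: field_simps)
  ultimately show "c * \<eta> \<le> 1 / 4"
    by linarith
  show \<eta>: "0 < \<eta>"
    using \<gamma> eps_pos by (simp add: \<eta>_def)
  show B: "1 < B"
    using \<delta> \<eta> by (simp add: B_def)
  show "0 < K"
    using B \<eta> c_pos by (simp add: K_def add_pos_nonneg)
  then show "0 < \<mu>"
    using B by (simp add: \<mu>_def)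
qed

lemma w_ge_1: "0 \<le> t \<Longrightarrow> 1 \<le> w t"
  using parameters by (simp add: w_def)

lemma theta_bounds:
  assumes "0 \<le> t"
  shows "- 1 \<le> \<theta> t" "\<theta> t \<le> B / (w t)\<^sup>2" "\<theta> t \<le> B"
proof -
  have "1 \<le> (w t)\<^sup>2"
    using w_ge_1[OF assms] by (simp add: one_le_power)
  then have "B / (w t)\<^sup>2 \<le> B"
    using parameters by (simp add: divide_le_eq mult_le_cancel_left1)
  then show "- 1 \<le> \<theta> t" "\<theta> t \<le> B / (w t)\<^sup>2" "\<theta> t \<le> B"
    using parameters by (simp_all add: \<theta>_def)
qed

lemma theta_antimono:
  assumes "0 \<le> s" "s \<le> t"
  shows "\<theta> t \<le> \<theta> s"
proof -
  have "w s \<le> w t"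
    using assms parameters by (simp add: w_def mult_left_mono)
  then have "(w s)\<^sup>2 \<le> (w t)\<^sup>2"
    using w_ge_1[of s] assms by (intro power_mono) auto
  then have "B / (w t)\<^sup>2 \<le> B / (w s)\<^sup>2"
    using parameters w_ge_1[of s] w_ge_1[of t] assms by (intro divide_left_mono) auto
  then show ?thesis
    by (simp add: \<theta>_def)
qed

lemma theta_deriv:
  assumes "0 \<le> t"
  shows "(\<theta> has_real_derivative \<theta>' t) (at t)"
proof -
  have w: "1 + \<mu> * t \<noteq> 0"
    using w_ge_1[OF assms] by (simp add: w_def)
  have "((\<lambda>t. - 1 + B / (1 + \<mu> * t)\<^sup>2) has_real_derivative
      - (B * (of_nat 2 * (1 + \<mu> * t) ^ (2 - 1) * (0 + \<mu> * 1)) / ((1 + \<mu> * t)\<^sup>2 * (1 + \<mu> * t)\<^sup>2)))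
      (at t)"
    using w by (intro derivative_eq_intros) auto
  moreover have "- (B * (of_nat 2 * (1 + \<mu> * t) ^ (2 - 1) * (0 + \<mu> * 1))
      / ((1 + \<mu> * t)\<^sup>2 * (1 + \<mu> * t)\<^sup>2)) = \<theta>' t"
    using w by (simp add: \<theta>'_def w_def divide_simps power2_eq_square power3_eq_cube)
  ultimately show ?thesis
    by (simp add: \<theta>_def[abs_def] w_def)
qed

lemma inverse_w_derivs:
  assumes "0 \<le> t"
  shows "((\<lambda>t. 1 / w t) has_real_derivative - \<mu> / (w t)\<^sup>2) (at t)"
    and "((\<lambda>t. 1 / (w t) ^ 3) has_real_derivative - 3 * \<mu> / (w t) ^ 4) (at t)"
proof -
  have w: "w t \<noteq> 0"
    using w_ge_1[OF assms] by simp
  have dw: "(w has_real_derivative \<mu>) (at t)"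
    unfolding w_def[abs_def] by (auto intro!: derivative_eq_intros)
  show "((\<lambda>t. 1 / w t) has_real_derivative - \<mu> / (w t)\<^sup>2) (at t)"
    using DERIV_inverse_fun[OF dw w] by (simp add: inverse_eq_divide power2_eq_square)
  have "((\<lambda>t. (w t) ^ 3) has_real_derivative 3 * (w t)\<^sup>2 * \<mu>) (at t)"
    using DERIV_power[OF dw, of 3] by (simp add: algebra_simps)
  from DERIV_inverse_fun[OF this] w
  have "((\<lambda>t. inverse ((w t) ^ 3)) has_real_derivative
      - (3 * (w t)\<^sup>2 * \<mu> * inverse (((w t) ^ 3)\<^sup>2))) (at t)"
    by simp
  moreover have "- (3 * (w t)\<^sup>2 * \<mu> * inverse (((w t) ^ 3)\<^sup>2)) = - 3 * \<mu> / (w t) ^ 4"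
    using w by (simp add: divide_simps power2_eq_square power3_eq_cube power4_eq_xxxx)
  ultimately show "((\<lambda>t. 1 / (w t) ^ 3) has_real_derivative - 3 * \<mu> / (w t) ^ 4) (at t)"
    by (simp add: inverse_eq_divide)
qed

lemma Phi_deriv:
  assumes "0 \<le> t"
  shows "(\<Phi> has_real_derivative \<theta> t + (\<theta> t)\<^sup>2 / A) (at t)"
proof -
  have w: "w t \<noteq> 0" and l: "\<mu> \<noteq> 0" "A \<noteq> 0"
    using w_ge_1[OF assms] parameters by auto
  have "(\<Phi> has_real_derivative - (1 - 1 / A) * 1 + B / \<mu> * (0 - - \<mu> / (w t)\<^sup>2) * (1 - 2 / A)
      + B\<^sup>2 / (3 * \<mu> * A) * (0 - - 3 * \<mu> / (w t) ^ 4)) (at t)"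
    unfolding \<Phi>_def[abs_def]
    by (intro DERIV_add DERIV_cmult DERIV_cmult_right DERIV_diff DERIV_ident DERIV_const
        inverse_w_derivs[OF assms])
  moreover have "- (1 - 1 / A) * 1 + B / \<mu> * (0 - - \<mu> / (w t)\<^sup>2) * (1 - 2 / A)
      + B\<^sup>2 / (3 * \<mu> * A) * (0 - - 3 * \<mu> / (w t) ^ 4) = \<theta> t + (\<theta> t)\<^sup>2 / A"
    unfolding \<theta>_def using w l by (simp add: divide_simps power2_eq_square power4_eq_xxxx) algebra
  ultimately show ?thesis
    by simp
qed

lemma R_deriv: "0 \<le> t \<Longrightarrow> (R has_real_derivative R' t) (at t)"
  unfolding R_def[abs_def] R'_def using Phi_deriv by (auto intro!: derivative_eq_intros)

lemma R_0: "R 0 = - 1 / \<eta>" and theta_0: "\<theta> 0 = B - 1"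
  by (simp_all add: R_def \<Phi>_def \<theta>_def w_def)

lemma one_plus_theta_div_A_pos: "0 \<le> t \<Longrightarrow> 0 < 1 + \<theta> t / A"
  using theta_bounds(1)[of t] parameters by (simp add: field_simps)

lemma R_antimono:
  assumes "0 \<le> s" "s \<le> t" "0 \<le> \<theta> t"
  shows "R t \<le> R s"
proof -
  have "(\<lambda>x. - R x) s \<le> (\<lambda>x. - R x) t"
  proof (rule DERIV_nonneg_imp_le_except_finite[OF assms(2) finite.emptyI])
    show "continuous_on {s..t} (\<lambda>x. - R x)"
      using assms by (intro continuous_intros continuous_at_imp_continuous_on ballI
          DERIV_isCont[OF R_deriv]) auto
    fix x assume x: "x \<in> {s<..<t} - {}"
    then have "0 \<le> \<theta> x"
      using theta_antimono[of x t] assms by auto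
    then have "0 \<le> - R' x"
      using parameters by (simp add: R'_def)
    with x assms R_deriv[of x] show "((\<lambda>x. - R x) has_real_derivative - R' x) (at x) \<and> 0 \<le> - R' x"
      by (auto intro!: derivative_eq_intros)
  qed
  then show ?thesis
    by simp
qed

lemma R_mono:
  assumes "0 \<le> s" "s \<le> t" "\<theta> s \<le> 0"
  shows "R s \<le> R t"
proof (rule DERIV_nonneg_imp_le_except_finite[OF assms(2) finite.emptyI])
  show "continuous_on {s..t} R"
    using assms by (intro continuous_at_imp_continuous_on ballI DERIV_isCont[OF R_deriv]) auto
  fix x assume x: "x \<in> {s<..<t} - {}"
  then have "\<theta> x \<le> 0" "0 < 1 + \<theta> x / A"
    using theta_antimono[of s x] one_plus_theta_div_A_pos[of x] assms by auto
  then have "\<theta> x * (1 + \<theta> x / A) \<le> 0"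
    by (intro mult_nonpos_nonneg) auto
  then have "0 \<le> \<gamma> * - (\<theta> x * (1 + \<theta> x / A))"
    using parameters by (intro mult_nonneg_nonneg) auto
  moreover have "R' x = \<gamma> * - (\<theta> x * (1 + \<theta> x / A))"
    by (simp add: R'_def power2_eq_square algebra_simps)
  ultimately have "0 \<le> R' x"
    by simp
  with x assms R_deriv[of x] show "(R has_real_derivative R' x) (at x) \<and> 0 \<le> R' x"
    by auto
qed

lemma F_minus_R_bounds:
  shows "0 \<le> \<theta> t \<Longrightarrow> F t - R t \<le> c" and "\<theta> t \<le> 0 \<Longrightarrow> c \<le> F t - R t"
proof -
  have "F t - R t = c + \<theta> t * (c / A - 1)" and "c / A < 1"
    using parameters by (simp_all add: F_def algebra_simps)
  then show "0 \<le> \<theta> t \<Longrightarrow> F t - R t \<le> c" "\<theta> t \<le> 0 \<Longrightarrow> c \<le> F t - R t"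
    by (simp_all add: mult_nonneg_nonpos mult_nonpos_nonpos)
qed

lemma F_0_neg: "F 0 < 0"
proof -
  have "F 0 - R 0 \<le> c"
    using F_minus_R_bounds(1)[of 0] parameters by (simp add: theta_0)
  moreover have "4 * c \<le> 1 / \<eta>"
    using parameters by (simp add: field_simps)
  ultimately show ?thesis
    using c_pos by (simp add: R_0)
qed

lemma Phi_le:
  assumes "0 \<le> t"
  shows "\<Phi> t \<le> - (1 - 1 / A) * t + B / \<mu> + B\<^sup>2 / \<mu>"
proof -
  have w: "1 \<le> w t" "1 \<le> (w t) ^ 3"
    using w_ge_1[OF assms] by (simp_all add: one_le_power)
  have "(1 - 1 / w t) * (1 - 2 / A) \<le> (1 - 1 / w t) * 1"
    using w parameters by (intro mult_left_mono) auto
  also have "\<dots> \<le> 1"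
    using w by simp
  finally have "B / \<mu> * ((1 - 1 / w t) * (1 - 2 / A)) \<le> B / \<mu> * 1"
    using parameters by (intro mult_left_mono) auto
  moreover have "B\<^sup>2 / (3 * \<mu> * A) * (1 - 1 / (w t) ^ 3) \<le> B\<^sup>2 / (3 * \<mu> * A) * 1"
    using w parameters by (intro mult_left_mono) auto
  moreover have "B\<^sup>2 / (3 * \<mu> * A) \<le> B\<^sup>2 / \<mu>"
    using parameters by (intro divide_left_mono) auto
  ultimately show ?thesis
    by (simp add: \<Phi>_def mult.assoc)
qed

definition "t_pos = (1 / \<eta> + \<gamma> * (B + B\<^sup>2) / \<mu>) / (\<gamma> * (1 - 1 / A)) + B / \<mu>"

lemma F_pos_at_t_pos: "0 \<le> t_pos" "0 < F t_pos"
proof -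
  define Q where "Q = 1 / \<eta> + \<gamma> * (B + B\<^sup>2) / \<mu>"
  have \<gamma>A: "0 < \<gamma> * (1 - 1 / A)"
    using parameters by simp
  have "0 \<le> Q / (\<gamma> * (1 - 1 / A))" "0 \<le> B / \<mu>"
    using \<gamma>A parameters by (simp_all add: Q_def)
  then have B_le: "B / \<mu> \<le> t_pos" and t_pos: "0 \<le> t_pos"
    by (simp_all add: t_pos_def Q_def[symmetric])
  then show "0 \<le> t_pos"
    by simp
  have "\<gamma> * (1 - 1 / A) * t_pos
      = \<gamma> * (1 - 1 / A) * (Q / (\<gamma> * (1 - 1 / A))) + \<gamma> * (1 - 1 / A) * (B / \<mu>)"
    by (simp only: t_pos_def Q_def distrib_left)
  also have "\<gamma> * (1 - 1 / A) * (Q / (\<gamma> * (1 - 1 / A))) = Q"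
    using \<gamma>A by (simp only: times_divide_eq_right nonzero_mult_div_cancel_left less_irrefl)
  finally have "\<gamma> * (1 - 1 / A) * t_pos = Q + \<gamma> * (1 - 1 / A) * (B / \<mu>)" .
  moreover have "0 \<le> \<gamma> * (1 - 1 / A) * (B / \<mu>)"
    using \<gamma>A parameters by simp
  moreover have "\<gamma> * \<Phi> t_pos \<le> \<gamma> * (- (1 - 1 / A) * t_pos + B / \<mu> + B\<^sup>2 / \<mu>)"
    using Phi_le[OF t_pos] parameters by (intro mult_left_mono) auto
  moreover have "\<gamma> * (- (1 - 1 / A) * t_pos + B / \<mu> + B\<^sup>2 / \<mu>)
      = - (\<gamma> * (1 - 1 / A) * t_pos) + \<gamma> * (B + B\<^sup>2) / \<mu>"
    by (simp add: algebra_simps add_divide_distrib)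
  moreover have "R t_pos = - 1 / \<eta> - \<gamma> * \<Phi> t_pos" "Q = 1 / \<eta> + \<gamma> * (B + B\<^sup>2) / \<mu>"
    by (simp_all add: R_def Q_def)
  ultimately have "0 \<le> R t_pos"
    by linarith
  moreover have "\<theta> t_pos \<le> 0"
  proof -
    have "B \<le> \<mu> * t_pos"
      using mult_left_mono[OF B_le, of \<mu>] parameters by simp
    then have w: "B \<le> w t_pos" "1 \<le> w t_pos"
      using parameters by (auto simp: w_def)
    then have "w t_pos * 1 \<le> w t_pos * w t_pos"
      by (intro mult_left_mono) auto
    with w have "B \<le> (w t_pos)\<^sup>2"
      unfolding power2_eq_square by linarith
    then show ?thesis
      using parameters by (simp add: \<theta>_def divide_le_eq)
  qed
  ultimately show "0 < F t_pos"
    using F_minus_R_bounds(2)[of t_pos] c_pos by linarith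
qed

lemma F_root:
  obtains T where "0 < T" "T \<le> t_pos" "F T = 0" "\<And>t. t \<in> {0..<T} \<Longrightarrow> F t < 0"
proof -
  have "continuous_on {0..t_pos} R" "continuous_on {0..t_pos} \<theta>"
    by (intro continuous_at_imp_continuous_on ballI DERIV_isCont[OF R_deriv] DERIV_isCont[OF theta_deriv];
        simp)+
  then have "continuous_on {0..t_pos} (\<lambda>t. - F t)"
    unfolding F_def[abs_def] using parameters by (intro continuous_intros) auto
  moreover have "0 < - F 0" "- F t_pos \<le> 0"
    using F_0_neg F_pos_at_t_pos(2) by auto
  ultimately obtain T where "0 < T" "T \<le> t_pos" "- F T = 0" "\<And>t. t \<in> {0..<T} \<Longrightarrow> 0 < - F t"
    using first_root[of t_pos "\<lambda>t. - F t"] F_pos_at_t_pos(1) by blast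
  with that show thesis
    by simp
qed

lemma R_neg_before_root:
  assumes "0 \<le> t" "t \<le> T" "F T = 0"
  shows "R t < 0"
proof (cases "0 \<le> \<theta> t")
  case True
  then have "R t \<le> R 0"
    using R_antimono[of 0 t] assms by auto
  moreover have "0 < 1 / \<eta>"
    using parameters by simp
  ultimately show ?thesis
    unfolding R_0 by linarith
next
  case False
  then have "R t \<le> R T" "\<theta> T \<le> 0"
    using R_mono[of t T] theta_antimono[of t T] assms by auto
  moreover have "c \<le> F T - R T"
    using F_minus_R_bounds(2) calculation(2) .
  ultimately show ?thesis
    using assms(3) c_pos by linarith
qed

text \<open>The curve in the coordinates of \<open>u_of\<close>/\<open>v_of\<close>; it satisfies the linear equation for \<open>g\<close>
  because \<open>R' = - \<gamma> \<theta> (1 + \<theta> / A)\<close>.\<close>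
definition "D t = \<theta> t / R t" for t
definition "g t = (1 + \<theta> t / A) / R t" for t
definition "D' t = \<theta>' t / R t - \<theta> t * R' t / (R t)\<^sup>2" for t
definition "g' t = (\<theta>' t / A) / R t - (1 + \<theta> t / A) * R' t / (R t)\<^sup>2" for t

lemma D_g_deriv:
  assumes "0 \<le> t" "R t \<noteq> 0"
  shows "(D has_real_derivative D' t) (at t)" "(g has_real_derivative g' t) (at t)"
  using theta_deriv[OF assms(1)] R_deriv[OF assms(1)] assms parameters
  unfolding D_def[abs_def] g_def[abs_def] D'_def g'_def
  by (auto intro!: derivative_eq_intros simp: divide_simps power2_eq_square; simp add: algebra_simps)+

lemma D'_g'_continuous:
  assumes "0 \<le> t" "R t \<noteq> 0"
  shows "isCont D' t \<and> isCont g' t"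
proof -
  have "isCont \<theta> t" "isCont R t"
    using theta_deriv[OF assms(1)] R_deriv[OF assms(1)] by (auto intro: DERIV_isCont)
  moreover have "isCont \<theta>' t"
    unfolding \<theta>'_def[abs_def] w_def using w_ge_1[OF assms(1)] unfolding w_def
    by (intro continuous_intros) auto
  moreover have "isCont R' t"
    unfolding R'_def[abs_def] using \<open>isCont \<theta> t\<close> parameters by (intro continuous_intros) auto
  ultimately show ?thesis
    unfolding D'_def[abs_def] g'_def[abs_def] using assms parameters by (auto intro!: continuous_intros)
qed

lemma g_relation:
  assumes "R t \<noteq> 0"
  shows "g' t = \<gamma> * D t * g t + (1 - \<rho>) * D' t / (c + 1)"
proof -
  have "(1 - \<rho>) * D' t / (c + 1) = D' t / A"
    using rho_lt1 by (simp add: A_def)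
  moreover have "g' t = \<gamma> * D t * g t + D' t / A"
    unfolding g'_def D'_def D_def g_def R'_def using assms parameters
    by (simp add: divide_simps power2_eq_square) algebra
  ultimately show ?thesis
    by simp
qed

lemma v_num_eq: "R t \<noteq> 0 \<Longrightarrow> 1 - D t + c * g t = F t / R t"
  by (simp add: D_def g_def F_def divide_simps)

lemma g_neg: "0 \<le> t \<Longrightarrow> R t < 0 \<Longrightarrow> g t < 0"
  unfolding g_def using one_plus_theta_div_A_pos by (simp add: divide_pos_neg)

lemma D'_eq:
  assumes "R t \<noteq> 0"
  shows "D' t = \<theta>' t / R t + \<gamma> * ((\<theta> t)\<^sup>2 * (1 + \<theta> t / A)) / (R t)\<^sup>2"
  using assms by (simp add: D'_def R'_def divide_simps power2_eq_square algebra_simps)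

lemma theta'_neg: "0 \<le> t \<Longrightarrow> \<theta>' t < 0"
  using parameters w_ge_1[of t] by (simp add: \<theta>'_def divide_neg_pos)

lemma D'_nonneg:
  assumes "0 \<le> t" "R t < 0"
  shows "\<theta>' t / R t \<le> D' t" "0 < \<theta>' t / R t"
proof -
  have "0 \<le> \<gamma> * ((\<theta> t)\<^sup>2 * (1 + \<theta> t / A)) / (R t)\<^sup>2"
    using parameters one_plus_theta_div_A_pos[OF assms(1)] by simp
  then show "\<theta>' t / R t \<le> D' t"
    using D'_eq[of t] assms by simp
  show "0 < \<theta>' t / R t"
    using theta'_neg[OF assms(1)] assms by (simp add: divide_neg_neg)
qed

lemma control_numerator_nonneg_theta_nonpos:
  assumes "0 \<le> t" "R t < 0" "\<theta> t \<le> 0" "0 \<le> 1 - D t + c * g t"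
  shows "0 \<le> (\<rho> * c + 1) * D' t + \<rho> * (c + 1) * D t * (1 - D t) + c * (\<rho> - 1) * D t * g t"
proof -
  have "0 < - (c * g t)"
    using g_neg[OF assms(1,2)] c_pos by (simp add: mult_pos_neg)
  then have D: "0 < 1 - D t"
    using assms(4) by linarith
  have "0 \<le> D t"
    using assms(2,3) by (simp add: D_def divide_nonpos_neg)
  note D = this D
  have "0 \<le> (\<rho> * c + 1) * D' t"
    using D'_nonneg[OF assms(1,2)] c_pos rho_pos by simp
  moreover have "0 \<le> \<rho> * (c + 1) * D t * (1 - D t)"
    using D c_pos rho_pos by simp
  moreover have "0 \<le> (c * (1 - \<rho>)) * (D t * - g t)"
    using D g_neg[OF assms(1,2)] c_pos rho_lt1 by (intro mult_nonneg_nonneg) auto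
  ultimately show ?thesis
    by (simp add: algebra_simps)
qed

lemma theta_pos_estimates:
  assumes t: "0 \<le> t" and R_t: "R t < 0" and \<theta>_t: "0 < \<theta> t"
  shows "0 < - D t" "- D t \<le> B * \<eta>" "- D t \<le> B / (w t)\<^sup>2 / - R t"
    and "- g t \<le> (1 + B) * \<eta>" "1 \<le> w t" "w t < B"
proof -
  have "R t \<le> R 0"
    using R_antimono[of 0 t] t \<theta>_t by auto
  then have "1 / - R t \<le> 1 / (1 / \<eta>)"
    using parameters R_t by (intro divide_left_mono) (auto simp: R_0 divide_neg_pos)
  then have X: "1 / - R t \<le> \<eta>"
    by simp
  have \<theta>_le: "\<theta> t \<le> B / (w t)\<^sup>2" "\<theta> t \<le> B"
    using theta_bounds[OF t] by auto
  have D_eq: "- D t = \<theta> t * (1 / - R t)"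
    by (simp add: D_def)
  show "0 < - D t"
    using \<theta>_t R_t by (simp add: D_def divide_pos_neg)
  show "- D t \<le> B * \<eta>"
    unfolding D_eq using \<theta>_le \<theta>_t X R_t by (intro mult_mono) auto
  have "\<theta> t / - R t \<le> B / (w t)\<^sup>2 / - R t"
    using \<theta>_le R_t by (intro divide_right_mono) auto
  then show "- D t \<le> B / (w t)\<^sup>2 / - R t"
    by (simp add: D_def)
  have "\<theta> t / A \<le> \<theta> t"
    using \<theta>_t parameters by (simp add: divide_le_eq)
  then have "(1 + \<theta> t / A) * (1 / - R t) \<le> (1 + B) * \<eta>"
    using \<theta>_le X R_t one_plus_theta_div_A_pos[OF t] by (intro mult_mono) auto
  then show "- g t \<le> (1 + B) * \<eta>"
    by (simp add: g_def)
  show w: "1 \<le> w t"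
    using w_ge_1[OF t] .
  have "1 < B / (w t)\<^sup>2"
    using \<theta>_t by (simp add: \<theta>_def)
  then have "(w t)\<^sup>2 < B"
    using w by (simp add: less_divide_eq)
  moreover have "w t \<le> (w t)\<^sup>2"
    using w by (simp add: power2_eq_square)
  ultimately show "w t < B"
    by linarith
qed

text \<open>For \<open>\<theta> > 0\<close> the positive term \<open>\<theta>'/R\<close> of \<open>D'\<close> dominates the other two terms; this is
  what the constants \<open>B\<close>, \<open>K\<close> and \<open>\<mu> = B K\<close> are chosen for.\<close>
lemma control_numerator_nonneg_theta_pos:
  assumes t: "0 \<le> t" and R_t: "R t < 0" and \<theta>_t: "0 < \<theta> t"
  shows "0 \<le> (\<rho> * c + 1) * D' t + \<rho> * (c + 1) * D t * (1 - D t) + c * (\<rho> - 1) * D t * g t"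
proof -
  define X y z where "X = - R t" and "y = - D t" and "z = - g t"
  note est = theta_pos_estimates[OF t R_t \<theta>_t, folded X_def y_def z_def]
  have X: "0 < X"
    using R_t by (simp add: X_def)
  have z: "0 < z"
    using g_neg[OF t R_t] by (simp add: z_def)
  have "\<mu> / ((w t)\<^sup>2 * X) \<le> 2 * B * \<mu> / ((w t) ^ 3 * X)"
  proof -
    have "\<mu> / ((w t)\<^sup>2 * X) * 1 \<le> \<mu> / ((w t)\<^sup>2 * X) * (2 * B / w t)"
      using est X parameters by (intro mult_left_mono) (auto simp: le_divide_eq)
    then show ?thesis
      using est X by (simp add: field_simps power2_eq_square power3_eq_cube)
  qed
  also have "\<dots> \<le> D' t"
    using D'_nonneg(1)[OF t R_t] by (simp add: \<theta>'_def X_def)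
  also have "\<dots> \<le> (\<rho> * c + 1) * D' t"
    using D'_nonneg[OF t R_t] c_pos rho_pos by simp
  finally have first: "\<mu> / ((w t)\<^sup>2 * X) \<le> (\<rho> * c + 1) * D' t" .
  have "\<rho> * ((c + 1) * y * (1 + y)) \<le> (c + 1) * y * (1 + y)"
    using rho_pos rho_lt1 est c_pos by (intro mult_left_le_one_le) auto
  also have "\<dots> \<le> (c + 1) * y * (1 + B * \<eta>)"
    using est c_pos by (intro mult_left_mono) auto
  finally have second: "- ((c + 1) * y * (1 + B * \<eta>)) \<le> \<rho> * (c + 1) * D t * (1 - D t)"
    by (simp add: y_def algebra_simps)
  have "(1 - \<rho>) * (c * y * z) \<le> c * y * z"
    using rho_pos rho_lt1 est c_pos z by (intro mult_left_le_one_le) auto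
  also have "\<dots> \<le> c * y * ((1 + B) * \<eta>)"
    using est c_pos by (intro mult_left_mono) auto
  finally have third: "- (c * y * ((1 + B) * \<eta>)) \<le> c * (\<rho> - 1) * D t * g t"
    by (simp add: y_def z_def algebra_simps)
  have "(c + 1) * y * (1 + B * \<eta>) + c * y * ((1 + B) * \<eta>) = y * K"
    by (simp add: K_def algebra_simps)
  moreover have "y * K \<le> \<mu> / ((w t)\<^sup>2 * X)"
    using mult_right_mono[OF est(3), of K] parameters by (simp add: \<mu>_def)
  ultimately show ?thesis
    using first second third by linarith
qed

lemma control_numerator_nonneg:
  assumes "0 \<le> t" "R t < 0" "0 \<le> 1 - D t + c * g t"
  shows "0 \<le> (\<rho> * c + 1) * D' t + \<rho> * (c + 1) * D t * (1 - D t) + c * (\<rho> - 1) * D t * g t"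
proof (cases "\<theta> t \<le> 0")
  case True
  show ?thesis
    by (rule control_numerator_nonneg_theta_nonpos[OF assms(1,2) True assms(3)])
next
  case False
  with assms show ?thesis
    by (intro control_numerator_nonneg_theta_pos) auto
qed

definition "u0 = c * (\<rho> * (1 + \<delta>) + \<eta> + \<delta> / A) / (\<rho> * c + 1)"
definition "v0 = (1 + \<delta> - c * \<eta> - c * \<delta> / A) / (\<rho> * c + 1)"

lemma initial_Dg: "D 0 = - \<delta>" "g 0 = - \<eta> - \<delta> / A"
  using parameters by (simp_all add: D_def g_def theta_0 R_0 B_def field_simps)

lemma initial_values: "u_of c \<rho> (D 0) (g 0) = u0" "v_of c \<rho> (D 0) (g 0) = v0"
  by (simp_all add: initial_Dg u_of_def v_of_def u0_def v0_def algebra_simps)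

lemma initial_point:
  shows "u0 \<in> {0..1}" "v0 \<in> {0<..1}" "1 - u0 - v0 = - \<delta>" "v0 - u0 / c = W_crit c \<rho> - \<epsilon>"
proof -
  have K: "0 < \<rho> * c + 1"
    using c_pos rho_pos by (simp add: add_pos_pos)
  have "1 / A \<le> 1 - \<rho>"
    using c_pos rho_lt1 by (simp add: A_def divide_le_eq)
  then have "\<delta> / A \<le> \<delta> * (1 - \<rho>)"
    using parameters mult_left_mono[of "1 / A" "1 - \<rho>" \<delta>] by simp
  moreover have "c * \<delta> / A \<le> \<delta>"
    using parameters mult_left_mono[of "c / A" 1 \<delta>] by (simp add: divide_le_eq)
  moreover have "c * \<eta> \<le> 1 / 4"
    using parameters c_pos by (simp add: field_simps)
  moreover have "c * (\<rho> * \<delta> + \<delta> * (1 - \<rho>)) = c * \<delta>"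
    by (simp add: algebra_simps)
  moreover have "c * (\<rho> * \<delta> + \<delta> / A) \<le> c * (\<rho> * \<delta> + \<delta> * (1 - \<rho>))"
    using calculation(1) c_pos by (intro mult_left_mono) auto
  moreover have "0 \<le> c * \<eta>" "0 \<le> c * \<delta> / A"
    using parameters c_pos by simp_all
  ultimately have "c * (\<rho> * (1 + \<delta>) + \<eta> + \<delta> / A) \<le> \<rho> * c + 1"
    "0 < 1 + \<delta> - c * \<eta> - c * \<delta> / A" "1 + \<delta> - c * \<eta> - c * \<delta> / A \<le> \<rho> * c + 1"
    using parameters by (simp_all add: algebra_simps)
  moreover have "0 \<le> c * (\<rho> * (1 + \<delta>) + \<eta> + \<delta> / A)"
    using parameters c_pos rho_pos by (intro mult_nonneg_nonneg add_nonneg_nonneg) auto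
  ultimately show "u0 \<in> {0..1}" "v0 \<in> {0<..1}"
    using K by (simp_all add: u0_def v0_def)
  have "1 - u0 - v0 = D 0"
    using Dg_coordinates(1)[OF c_pos rho_pos, of "D 0" "g 0"] unfolding initial_values .
  then show "1 - u0 - v0 = - \<delta>"
    by (simp add: initial_Dg)
  have A_eq: "(c + 1) / A = 1 - \<rho>" and \<eta>_eq: "(c + 1) * \<eta> = (\<rho> * c + 1) * \<epsilon>"
    using c_pos rho_lt1 by (simp_all add: A_def \<eta>_def W_gain_def)
  have "v0 - u0 / c = ((1 + \<delta> - c * \<eta> - c * \<delta> / A) - (\<rho> * (1 + \<delta>) + \<eta> + \<delta> / A)) / (\<rho> * c + 1)"
    using c_pos by (simp add: u0_def v0_def diff_divide_distrib)
  also have "(1 + \<delta> - c * \<eta> - c * \<delta> / A) - (\<rho> * (1 + \<delta>) + \<eta> + \<delta> / A)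
      = (1 - \<rho>) * (1 + \<delta>) - (c + 1) * \<eta> - ((c + 1) / A) * \<delta>"
    by (simp add: algebra_simps add_divide_distrib)
  also have "\<dots> = (1 - \<rho>) - (\<rho> * c + 1) * \<epsilon>"
    unfolding A_eq \<eta>_eq by (simp add: algebra_simps)
  also have "((1 - \<rho>) - (\<rho> * c + 1) * \<epsilon>) / (\<rho> * c + 1) = W_crit c \<rho> - \<epsilon>"
    using K by (simp add: W_crit_def field_simps)
  finally show "v0 - u0 / c = W_crit c \<rho> - \<epsilon>" .
qed

lemma reachable: "(u0, v0) \<in> V_set c \<rho> admissible"
proof -
  obtain T where T: "0 < T" "F T = 0" and F_neg: "\<And>t. t \<in> {0..<T} \<Longrightarrow> F t < 0"
    using F_root by metis
  have R_neg: "R t < 0" if "t \<in> {0..T}" for t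
    using R_neg_before_root[of t T] that T by auto
  have v_nonneg: "0 \<le> 1 - D t + c * g t" if "t \<in> {0..T}" for t
  proof -
    have "F t \<le> 0"
      using F_neg[of t] T that by (cases "t = T") auto
    then show ?thesis
      using v_num_eq[of t] R_neg[OF that] by (simp add: divide_nonpos_neg)
  qed
  have "(u_of c \<rho> (D 0) (g 0), v_of c \<rho> (D 0) (g 0)) \<in> V_set c \<rho> admissible"
  proof (rule reachable_by_admissible_control_Dg[where D' = D' and g' = g', OF c_pos rho_pos T(1)])
    fix t assume t: "t \<in> {0..T}"
    then have t0: "0 \<le> t" and R_t: "R t < 0"
      using R_neg by auto
    show "(D has_real_derivative D' t) (at t) \<and> (g has_real_derivative g' t) (at t)"
      using D_g_deriv[OF t0] R_t by simp
    show "isCont D' t \<and> isCont g' t"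
      using D'_g'_continuous[OF t0] R_t by simp
    show "g' t = \<gamma> * D t * g t + (1 - \<rho>) * D' t / (c + 1)"
      using g_relation R_t by simp
    have "0 < - (c * g t)"
      using g_neg[OF t0 R_t] c_pos by (simp add: mult_pos_neg)
    then show "0 < \<rho> * (1 - D t) - g t"
      using v_nonneg[OF t] g_neg[OF t0 R_t] rho_pos by (smt (verit) mult_pos_pos)
    show "0 \<le> (\<rho> * c + 1) * D' t + \<rho> * (c + 1) * D t * (1 - D t) + c * (\<rho> - 1) * D t * g t"
      using control_numerator_nonneg[OF t0 R_t v_nonneg[OF t]] .
  next
    show "1 - D T + c * g T = 0"
      using v_num_eq[of T] R_neg[of T] T by simp
  qed (use initial_values initial_point in auto)
  then show ?thesis
    by (simp add: initial_values)
qed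

end

section \<open>Comparison of the reachable sets\<close>

lemma not_in_V_setI:
  assumes "\<And>a T u v. a \<in> \<T> \<Longrightarrow> solves_on c \<rho> a T u v \<Longrightarrow> 0 \<le> T \<Longrightarrow>
    u 0 = u0 \<Longrightarrow> v 0 = v0 \<Longrightarrow> v T = 0 \<Longrightarrow> 0 < u T \<Longrightarrow> False"
  shows "(u0, v0) \<notin> V_set c \<rho> \<T>"
  using assms unfolding V_set_def E_set_def by blast

lemma bounded_control_solution:
  assumes "0 < c" "0 < \<rho>" "a \<in> admissible_mM m M" "solves_on c \<rho> a T u v" "0 \<le> T"
  shows "controlled_solution c \<rho> T a u v" and "\<And>t. 0 < t \<Longrightarrow> a t \<le> M"
  using assms by (auto simp: controlled_solution_def admissible_mM_def)

lemma not_in_bounded_V_set_rho_gt1: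
  fixes c \<rho> m M u0 v0 \<tau> :: real
  defines "\<kappa> \<equiv> W_gain c \<rho> * (- W_crit c \<rho>) * u0 / 8"
  assumes c: "0 < c" and \<rho>: "1 < \<rho>"
    and \<tau>: "0 < \<tau>" "(1 + \<rho>) * \<tau> \<le> 1 / 4" "c * M * \<tau> \<le> u0 / 2" "W_gain c \<rho> * \<tau> \<le> 1"
      "\<kappa> * \<tau> < u0 / c"
    and init: "u0 \<in> {0<..1}" "v0 \<in> {0<..1}" "1 / 2 \<le> 1 - u0 - v0" "- (\<kappa> / 2 * \<tau>) \<le> v0 - u0 / c"
  shows "(u0, v0) \<notin> V_set c \<rho> (admissible_mM m M)"
proof (rule not_in_V_setI)
  fix a T u v
  assume a: "a \<in> admissible_mM m M" and sol: "solves_on c \<rho> a T u v" "0 \<le> T"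
    and start: "u 0 = u0" "v 0 = v0" and stop: "v T = 0" "0 < u T"
  interpret controlled_solution c \<rho> T a u v
    using bounded_control_solution(1)[OF c _ a sol] \<rho> by simp
  have "u T = 0"
    using u_vanishes_with_v[of M \<tau>] \<rho> bounded_control_solution(2)[OF c _ a sol] \<tau> init stop
    unfolding \<kappa>_def start[symmetric] D_def W_def by auto
  with stop show False
    by simp
qed

lemma not_in_bounded_V_set_rho_lt1:
  fixes c \<rho> m M u0 v0 \<delta> \<tau> :: real
  defines "\<kappa> \<equiv> W_gain c \<rho> * W_crit c \<rho> * \<delta>\<^sup>2 / 4"
  assumes c: "0 < c" and \<rho>: "0 < \<rho>" "\<rho> < 1" and \<delta>: "0 < \<delta>"
    and \<tau>: "0 < \<tau>" "((1 + \<rho>) + (c + 1) * M) * \<tau> \<le> \<delta> / 2" "\<kappa> * \<tau> < W_crit c \<rho>"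
    and init: "u0 \<in> {0..1}" "v0 \<in> {0<..1}" "1 - u0 - v0 \<le> - \<delta>" "W_crit c \<rho> - \<kappa> * \<tau> \<le> v0 - u0 / c"
  shows "(u0, v0) \<notin> V_set c \<rho> (admissible_mM m M)"
proof (rule not_in_V_setI)
  fix a T u v
  assume a: "a \<in> admissible_mM m M" and sol: "solves_on c \<rho> a T u v" "0 \<le> T"
    and start: "u 0 = u0" "v 0 = v0" and stop: "v T = 0"
  interpret controlled_solution c \<rho> T a u v
    using bounded_control_solution(1)[OF c \<rho>(1) a sol] .
  have "0 < v T"
    using v_stays_positive[of M \<delta> \<tau>] \<rho> bounded_control_solution(2)[OF c \<rho>(1) a sol] \<delta> \<tau> init
    unfolding \<kappa>_def start[symmetric] D_def W_def by auto
  with stop show False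
    by simp
qed

lemma unreachable_point_rho_gt1:
  fixes c \<rho> m M :: real
  assumes c: "0 < c" and \<rho>: "1 < \<rho>" and M: "0 < M"
  shows "\<exists>p. p \<in> V_set c \<rho> admissible \<and> p \<notin> V_set c \<rho> (admissible_mM m M)"
proof -
  define w where "w = 1 / (2 * (c + 1))"
  define \<tau> where "\<tau> = min (min (1 / (4 * (1 + \<rho>))) (c * w / (2 * M * c))) (1 / W_gain c \<rho>)"
  define \<kappa> where "\<kappa> = W_gain c \<rho> * (- W_crit c \<rho>) * (c * w) / 8"
  define \<epsilon> where "\<epsilon> = min ((\<rho> - 1) / (4 * \<rho> * (c + 1))) (\<kappa> / 2 * \<tau>)"
  have \<gamma>: "0 < W_gain c \<rho>" and "0 < - W_crit c \<rho>" and w: "0 < w" "(c + 1) * w = 1 / 2"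
    using W_gain_pos[OF c] W_crit_sign(4)[OF c] \<rho> c by (auto simp: w_def)
  then have \<kappa>: "0 < \<kappa>"
    using c unfolding \<kappa>_def by (intro divide_pos_pos mult_pos_pos) auto
  have \<tau>_le: "\<tau> \<le> 1 / (4 * (1 + \<rho>))" "\<tau> \<le> c * w / (2 * M * c)" "\<tau> \<le> 1 / W_gain c \<rho>"
    by (simp_all add: \<tau>_def)
  have "(1 + \<rho>) * \<tau> \<le> (1 + \<rho>) * (1 / (4 * (1 + \<rho>)))"
    "c * M * \<tau> \<le> c * M * (c * w / (2 * M * c))" "W_gain c \<rho> * \<tau> \<le> W_gain c \<rho> * (1 / W_gain c \<rho>)"
    using \<tau>_le c M \<gamma> \<rho> by (intro mult_left_mono; simp)+
  moreover have "(1 + \<rho>) * (1 / (4 * (1 + \<rho>))) = 1 / 4" "c * M * (c * w / (2 * M * c)) = c * w / 2"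
    "W_gain c \<rho> * (1 / W_gain c \<rho>) = 1"
    using \<rho> c M \<gamma> by simp_all
  moreover have "0 < \<tau>"
    using \<gamma> w c M \<rho> by (simp add: \<tau>_def)
  ultimately have \<tau>: "0 < \<tau>" "(1 + \<rho>) * \<tau> \<le> 1 / 4" "c * M * \<tau> \<le> c * w / 2" "W_gain c \<rho> * \<tau> \<le> 1"
    by linarith+
  have "\<kappa> * \<tau> \<le> \<kappa> * (1 / W_gain c \<rho>)"
    using \<kappa> \<tau>_le(3) by (intro mult_left_mono) auto
  also have "\<dots> = (- W_crit c \<rho>) * (c * w) / 8"
    using \<gamma> by (simp add: \<kappa>_def)
  also have "\<dots> < 1 / c * (c * w) / 8"
    using minus_W_crit_less[OF c] \<rho> w c by (intro divide_strict_right_mono mult_strict_right_mono) auto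
  also have "\<dots> < c * w / c"
    using c w by simp
  finally have \<kappa>\<tau>: "\<kappa> * \<tau> < c * w / c" .
  have \<epsilon>: "0 < \<epsilon>" "\<epsilon> \<le> (\<rho> - 1) / (4 * \<rho> * (c + 1))" "\<epsilon> \<le> \<kappa> / 2 * \<tau>"
    using \<rho> c \<kappa> \<tau> by (auto simp: \<epsilon>_def)
  interpret curve: curve_rho_gt1 c \<rho> \<epsilon>
    using c \<rho> \<epsilon> by unfold_locales auto
  have w_eq: "curve.w = w"
    by (simp add: curve.w_def w_def)
  have "c * w \<le> 1" "w \<le> 1"
    using c by (simp_all add: w_def field_simps)
  then have "(c * w, w - \<epsilon>) \<notin> V_set c \<rho> (admissible_mM m M)"
    using not_in_bounded_V_set_rho_gt1[OF c \<rho> \<tau> \<kappa>\<tau>[unfolded \<kappa>_def]] c w \<epsilon>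
      curve.eps_less_w[unfolded w_eq] by (auto simp: \<kappa>_def algebra_simps)
  with curve.reachable[unfolded w_eq] show ?thesis
    by blast
qed

lemma unreachable_point_rho_lt1:
  fixes c \<rho> m M :: real
  assumes c: "0 < c" and \<rho>: "0 < \<rho>" "\<rho> < 1" and M: "0 < M"
  shows "\<exists>p. p \<in> V_set c \<rho> admissible \<and> p \<notin> V_set c \<rho> (admissible_mM m M)"
proof -
  define \<delta> where "\<delta> = \<rho> * c / (2 * (1 + c\<^sup>2))"
  define C where "C = (1 + \<rho>) + (c + 1) * M"
  define \<tau> where "\<tau> = \<delta> / (2 * C)"
  define \<kappa> where "\<kappa> = W_gain c \<rho> * W_crit c \<rho> * \<delta>\<^sup>2 / 4"
  define \<epsilon> where "\<epsilon> = min (\<kappa> * \<tau>) (1 / (4 * c))"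
  have \<gamma>: "0 < W_gain c \<rho>" and w: "0 < W_crit c \<rho>"
    using W_gain_pos[OF c \<rho>(1)] W_crit_sign(2)[OF c \<rho>] by auto
  have \<delta>: "0 < \<delta>"
    using c \<rho> by (simp add: \<delta>_def add_pos_nonneg)
  have C: "1 \<le> C"
    using c \<rho> M by (simp add: C_def)
  then have \<tau>: "0 < \<tau>" "C * \<tau> = \<delta> / 2"
    using \<delta> by (simp_all add: \<tau>_def)
  have \<kappa>: "0 < \<kappa>"
    using \<gamma> w \<delta> by (simp add: \<kappa>_def)
  have \<epsilon>: "0 < \<epsilon>" "\<epsilon> \<le> 1 / (4 * c)" "\<epsilon> \<le> \<kappa> * \<tau>"
    using \<kappa> \<tau> c by (auto simp: \<epsilon>_def)
  interpret curve: curve_rho_lt1 c \<rho> \<epsilon>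
    using c \<rho> \<epsilon> by unfold_locales auto
  have \<delta>_eq: "curve.\<delta> = \<delta>"
    by (simp add: curve.\<delta>_def \<delta>_def)
  have "\<delta> \<le> 1" "\<tau> \<le> 1" "W_gain c \<rho> \<le> 1"
    using curve.parameters \<delta> \<tau> C unfolding \<delta>_eq by (auto simp: \<tau>_def field_simps)
  then have "W_gain c \<rho> * \<delta>\<^sup>2 * \<tau> \<le> 1 * 1 * 1"
    using \<gamma> \<delta> \<tau> by (intro mult_mono power_le_one) auto
  then have "W_crit c \<rho> * (W_gain c \<rho> * \<delta>\<^sup>2 * \<tau> / 4) < W_crit c \<rho> * 1"
    using w by (intro mult_strict_left_mono) auto
  then have "\<kappa> * \<tau> < W_crit c \<rho>"
    by (simp add: \<kappa>_def algebra_simps)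
  then have "(curve.u0, curve.v0) \<notin> V_set c \<rho> (admissible_mM m M)"
  proof (intro not_in_bounded_V_set_rho_lt1[OF c \<rho> \<delta> \<tau>(1)])
    show "((1 + \<rho>) + (c + 1) * M) * \<tau> \<le> \<delta> / 2"
      using \<tau>(2) by (simp add: C_def)
    show "1 - curve.u0 - curve.v0 \<le> - \<delta>"
      using curve.initial_point(3) by (simp add: \<delta>_eq)
    show "W_crit c \<rho> - W_gain c \<rho> * W_crit c \<rho> * \<delta>\<^sup>2 / 4 * \<tau> \<le> curve.v0 - curve.u0 / c"
      using curve.initial_point(4) \<epsilon>(3) by (simp add: \<kappa>_def)
  qed (use curve.initial_point in \<open>simp_all add: \<kappa>_def\<close>)
  with curve.reachable show ?thesis
    by blast
qed

theorem mainTheorem10: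
  fixes c \<rho> m M :: real
  assumes "c > 0" and "\<rho> > 0" and "\<rho> \<noteq> 1" and "0 \<le> m" and "m \<le> M" and "M > 0"
  shows "V_set c \<rho> (admissible_mM m M) \<subset> V_set c \<rho> admissible"
proof -
  have "V_set c \<rho> (admissible_mM m M) \<subseteq> V_set c \<rho> admissible"
    unfolding V_set_def admissible_mM_def by auto
  moreover have "\<exists>p. p \<in> V_set c \<rho> admissible \<and> p \<notin> V_set c \<rho> (admissible_mM m M)"
    using unreachable_point_rho_lt1[OF assms(1,2) _ assms(6)]
      unreachable_point_rho_gt1[OF assms(1) _ assms(6)] assms(3) by (cases "\<rho> < 1") auto
  ultimately show ?thesis
    by blast
qed

end
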